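(* Let $X$ be a $0$-dimensional space. Then the dual group of $C_p(X,\mathbb Z)\otimes_{\mathcal Q}\mathbb T$ is isomorphic to the free abelian group $A(X)$: $(C_p(X,\mathbb Z)\otimes_{\mathcal Q}\mathbb T)^{\wedge}\simeq A(X)$.
   Context: Spaces are Tikhonov; $0$-dimensional means having a base of clopen sets. $C_p(X,\mathbb Z)$ is the group of continuous functions $X\to\mathbb Z$ ($\mathbb Z$ discrete) with the topology of pointwise convergence; $A(X)$ is the free abelian group on $X$. $\mathbb T=\mathbb R/\mathbb Z$; the dual $\widehat L$ (also written $L^{\wedge}$) is the group of continuous homomorphisms $L\to\mathbb T$. A subset $A$ of a topological abelian group $L$ is quasi-convex if for every $g\notin A$ there is a continuous character $\chi$ with $|\chi(a)|\le1/4$ on $A$ and $|\chi(g)|>1/4$; $\mathcal Q$ is the class of Hausdorff abelian groups with a basis at $0$ of quasi-convex sets. A continuous bihomomorphism is separately a continuous homomorphism in each variable and continuous at $(0,0)$. For $G_1,G_2\in\mathcal Q$, $G_1\otimes_{\mathcal Q}G_2$ is the group in $\mathcal Q$ with a continuous bihomomorphism $\otimes_{\mathcal Q}:G_1\times G_2\to G_1\otimes_{\mathcal Q}G_2$ through which every continuous bihomomorphism into a group of $\mathcal Q$ factors via a unique continuous homomorphism (unique up to topological isomorphism). *)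

theory Defs
  imports "HOL-Analysis.Analysis" "HOL-Algebra.Algebra"
begin

definition top_ab_group :: "'g monoid \<Rightarrow> 'g topology \<Rightarrow> bool" where
  "top_ab_group G \<tau> \<longleftrightarrow> comm_group G \<and> topspace \<tau> = carrier G \<and>
     continuous_map (prod_topology \<tau> \<tau>) \<tau> (\<lambda>(x,y). x \<otimes>\<^bsub>G\<^esub> y) \<and>
     continuous_map \<tau> \<tau> (\<lambda>x. inv\<^bsub>G\<^esub> x)"

section \<open>The circle group T = R/Z, represented on [0,1) with addition mod 1\<close>

definition T_grp :: "real monoid" where
  "T_grp = \<lparr>carrier = {x. 0 \<le> x \<and> x < 1}, mult = (\<lambda>x y. frac (x + y)), one = 0\<rparr>"

text \<open>Quotient topology of R -> R/Z.\<close>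
definition T_top :: "real topology" where
  "T_top = topology (\<lambda>U. U \<subseteq> {x. 0 \<le> x \<and> x < 1} \<and> open {x. frac x \<in> U})"

definition T_abs :: "real \<Rightarrow> real" where
  "T_abs t = min (frac t) (1 - frac t)"

definition characters :: "'g monoid \<Rightarrow> 'g topology \<Rightarrow> ('g \<Rightarrow> real) set" where
  "characters G \<tau> = {chi. chi \<in> hom G T_grp \<and> continuous_map \<tau> T_top chi}"

definition quasi_convex :: "'g monoid \<Rightarrow> 'g topology \<Rightarrow> 'g set \<Rightarrow> bool" where
  "quasi_convex G \<tau> A \<longleftrightarrow> A \<subseteq> carrier G \<and>
     (\<forall>g \<in> carrier G - A. \<exists>chi \<in> characters G \<tau>.
        (\<forall>a\<in>A. T_abs (chi a) \<le> 1/4) \<and> T_abs (chi g) > 1/4)"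

definition nbhd_of_one :: "'g monoid \<Rightarrow> 'g topology \<Rightarrow> 'g set \<Rightarrow> bool" where
  "nbhd_of_one G \<tau> V \<longleftrightarrow> (\<exists>U. openin \<tau> U \<and> \<one>\<^bsub>G\<^esub> \<in> U \<and> U \<subseteq> V)"

definition in_Q :: "'g monoid \<Rightarrow> 'g topology \<Rightarrow> bool" where
  "in_Q G \<tau> \<longleftrightarrow> top_ab_group G \<tau> \<and> Hausdorff_space \<tau> \<and>
     (\<forall>W. nbhd_of_one G \<tau> W \<longrightarrow>
        (\<exists>V. nbhd_of_one G \<tau> V \<and> quasi_convex G \<tau> V \<and> V \<subseteq> W))"

definition cont_bihom :: "'g1 monoid \<Rightarrow> 'g1 topology \<Rightarrow> 'g2 monoid \<Rightarrow> 'g2 topology \<Rightarrow>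
     'h monoid \<Rightarrow> 'h topology \<Rightarrow> ('g1 \<Rightarrow> 'g2 \<Rightarrow> 'h) \<Rightarrow> bool" where
  "cont_bihom G1 \<tau>1 G2 \<tau>2 H \<tau>H b \<longleftrightarrow>
     (\<forall>x \<in> carrier G1. (\<lambda>y. b x y) \<in> hom G2 H \<and> continuous_map \<tau>2 \<tau>H (\<lambda>y. b x y)) \<and>
     (\<forall>y \<in> carrier G2. (\<lambda>x. b x y) \<in> hom G1 H \<and> continuous_map \<tau>1 \<tau>H (\<lambda>x. b x y)) \<and>
     (\<forall>W. openin \<tau>H W \<and> \<one>\<^bsub>H\<^esub> \<in> W \<longrightarrow>
        (\<exists>U V. openin \<tau>1 U \<and> \<one>\<^bsub>G1\<^esub> \<in> U \<and> openin \<tau>2 V \<and> \<one>\<^bsub>G2\<^esub> \<in> V \<and>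
               (\<forall>x\<in>U. \<forall>y\<in>V. b x y \<in> W)))"

text \<open>Universal property of (P, tau_P, t) as G1 \<otimes>_Q G2, tested against all
  targets H in Q whose carrier lives in the type 'h.\<close>
definition Q_tensor_universal ::
  "'h itself \<Rightarrow> 'g1 monoid \<Rightarrow> 'g1 topology \<Rightarrow> 'g2 monoid \<Rightarrow> 'g2 topology \<Rightarrow>
   'p monoid \<Rightarrow> 'p topology \<Rightarrow> ('g1 \<Rightarrow> 'g2 \<Rightarrow> 'p) \<Rightarrow> bool" where
  "Q_tensor_universal (_::'h itself) G1 \<tau>1 G2 \<tau>2 P \<tau>P t \<longleftrightarrow>
     (\<forall>(H::'h monoid) \<tau>H b. in_Q H \<tau>H \<and> cont_bihom G1 \<tau>1 G2 \<tau>2 H \<tau>H b \<longrightarrow>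
        (\<exists>f. f \<in> hom P H \<and> continuous_map \<tau>P \<tau>H f \<and>
             (\<forall>x\<in>carrier G1. \<forall>y\<in>carrier G2. b x y = f (t x y)) \<and>
             (\<forall>g. g \<in> hom P H \<and> continuous_map \<tau>P \<tau>H g \<and>
                  (\<forall>x\<in>carrier G1. \<forall>y\<in>carrier G2. b x y = g (t x y))
                  \<longrightarrow> (\<forall>z\<in>carrier P. g z = f z))))"

definition Cp_Z :: "'a topology \<Rightarrow> ('a \<Rightarrow> int) monoid" where
  "Cp_Z XX = \<lparr>carrier = {f. f \<in> extensional (topspace XX) \<and>
                           continuous_map XX (discrete_topology (UNIV::int set)) f},
             mult = (\<lambda>f g. restrict (\<lambda>x. f x + g x) (topspace XX)),
             one = restrict (\<lambda>x. 0) (topspace XX)\<rparr>"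

definition Cp_Z_top :: "'a topology \<Rightarrow> ('a \<Rightarrow> int) topology" where
  "Cp_Z_top XX = subtopology (product_topology (\<lambda>_. discrete_topology (UNIV::int set)) (topspace XX))
                            (carrier (Cp_Z XX))"

definition zero_dimensional :: "'a topology \<Rightarrow> bool" where
  "zero_dimensional XX \<longleftrightarrow>
     (\<forall>U x. openin XX U \<and> x \<in> U \<longrightarrow> (\<exists>V. openin XX V \<and> closedin XX V \<and> x \<in> V \<and> V \<subseteq> U))"

definition tychonoff_space :: "'a topology \<Rightarrow> bool" where
  "tychonoff_space XX \<longleftrightarrow> completely_regular_space XX \<and> Hausdorff_space XX"

definition dual_group :: "'g monoid \<Rightarrow> 'g topology \<Rightarrow> ('g \<Rightarrow> real) monoid" where
  "dual_group G \<tau> = \<lparr>carrier = {chi. chi \<in> characters G \<tau> \<and> chi \<in> extensional (carrier G)},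
                     mult = (\<lambda>chi psi. restrict (\<lambda>z. frac (chi z + psi z)) (carrier G)),
                     one = restrict (\<lambda>z. 0) (carrier G)\<rparr>"

end

theory Submission
  imports Defs
begin

text \<open>
  Composing a character of P = C_p(X, Z) \<otimes>_Q T with the canonical map t gives a continuous
  bihomomorphism C_p(X, Z) \<times> T \<rightarrow> T, and since T belongs to Q the universal property makes this
  a bijection, compatible with addition, between the dual of P and such bihomomorphisms.
  Every a = \<Sum> n_i x_i in A(X) gives one, (f, s) \<mapsto> (\<Sum> n_i f(x_i)) s mod 1, and different a
  give different ones because clopen sets separate points. Conversely, continuity at (0, 0) gives
  a finite F \<subseteq> X and a neighbourhood V of 0 with b(f, s) small whenever f vanishes on F and
  s \<in> V; such f form a group, so b(f, s) = 0 and b(f, -) depends only on f restricted to F.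
  Writing f on F through indicators of clopen sets isolating the points of F, and using that
  every continuous endomorphism of T is s \<mapsto> n s, shows b comes from some a.
\<close>

section \<open>The circle group\<close>

lemma T_abs_eq_dist_round: "T_abs x = \<bar>x - of_int (round x)\<bar>"
proof (cases "frac x \<ge> 1/2")
  case True
  then have "x \<notin> \<int>" by (auto simp flip: frac_eq_0_iff)
  then have "ceiling x = floor x + 1" by (metis Ints_of_int ceiling_altdef)
  moreover have "round x = ceiling x" unfolding round_altdef using True by simp
  ultimately show ?thesis using True unfolding T_abs_def frac_def by simp
next
  case False
  then have "round x = floor x" unfolding round_altdef by simp
  then show ?thesis using False unfolding T_abs_def frac_def by simp
qed

lemma T_abs_le_dist_int: "T_abs x \<le> \<bar>x - of_int m\<bar>"
  unfolding T_abs_eq_dist_round by (rule round_diff_minimal)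

lemma T_abs_nonneg: "T_abs x \<ge> 0"
  by (simp add: T_abs_eq_dist_round)

lemma T_abs_le_abs: "T_abs x \<le> \<bar>x\<bar>"
  using T_abs_le_dist_int[of x 0] by simp

lemma T_abs_le_half: "T_abs x \<le> 1/2"
  unfolding T_abs_eq_dist_round using of_int_round_ge[of x] of_int_round_le[of x] by linarith

lemma T_abs_add_of_int [simp]: "T_abs (x + of_int m) = T_abs x"
  by (simp add: T_abs_def)

lemma T_abs_frac [simp]: "T_abs (frac x) = T_abs x"
  by (simp add: T_abs_def)

lemma T_abs_minus [simp]: "T_abs (- x) = T_abs x"
  using T_abs_le_dist_int[of "-x" "- round x"] T_abs_le_dist_int[of x "- round (-x)"]
  unfolding T_abs_eq_dist_round by simp

lemma T_abs_triangle: "T_abs (x + y) \<le> T_abs x + T_abs y"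
  using T_abs_le_dist_int[of "x + y" "round x + round y"] by (simp add: T_abs_eq_dist_round)

lemma T_abs_of_nat_mult_le: "T_abs (of_nat j * x) \<le> of_nat j * T_abs x"
proof (induction j)
  case (Suc j)
  have "T_abs (of_nat (Suc j) * x) = T_abs (of_nat j * x + x)" by (simp add: algebra_simps)
  also have "\<dots> \<le> T_abs (of_nat j * x) + T_abs x" by (rule T_abs_triangle)
  finally show ?case using Suc by (simp add: algebra_simps)
qed (simp add: T_abs_def)

lemma T_abs_eq_0_iff: "T_abs x = 0 \<longleftrightarrow> x \<in> \<int>"
proof
  assume "T_abs x = 0"
  then have "x = of_int (round x)" unfolding T_abs_eq_dist_round by simp
  then show "x \<in> \<int>" by (metis Ints_of_int)
qed (auto elim: Ints_cases simp: T_abs_eq_dist_round)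

lemma exists_multiple_T_abs_gt_quarter:
  assumes "T_abs y > 0"
  obtains k :: nat where "k \<ge> 1" "(real k - 1) * T_abs y \<le> 1/4" "T_abs (of_nat k * y) > 1/4"
proof -
  define z where "z = y - of_int (round y)"
  define s where "s = \<bar>z\<bar>"
  have s: "s = T_abs y" "s > 0" "s \<le> 1/2"
    using assms T_abs_le_half[of y] by (simp_all add: s_def z_def T_abs_eq_dist_round)
  \<comment> \<open>the least k with k s > 1/4; as s \<le> 1/2, also k s < 3/4\<close>
  define k where "k = nat (floor (1/(4 * s))) + 1"
  have rk: "real k = of_int (floor (1/(4 * s))) + 1"
    unfolding k_def using s by simp
  have k_le: "(real k - 1) * s \<le> 1/4"
    using mult_right_mono[of "real k - 1" "1/(4 * s)" s] s unfolding rk by simp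
  have "real k > 1/(4 * s)" unfolding rk by linarith
  then have k_gt: "real k * s > 1/4" using s by (simp add: divide_less_eq)
  have ks: "real k * s < 3/4"
  proof (cases "s < 1/2")
    case True
    then show ?thesis using k_le by (simp add: algebra_simps)
  next
    case False
    then have "s = 1/2" using s by simp
    moreover have "k = 1" unfolding k_def \<open>s = 1/2\<close> by simp
    ultimately show ?thesis by simp
  qed
  have "of_nat k * y = of_nat k * z + of_int (int k * round y)"
    by (simp add: z_def algebra_simps)
  then have "T_abs (of_nat k * y) = T_abs (of_nat k * z + of_int (int k * round y))"
    by (simp only:)
  also have "\<dots> = T_abs (of_nat k * z)" by (rule T_abs_add_of_int)
  also have "\<dots> = T_abs (real k * s)"
  proof (cases "z \<ge> 0")
    case False
    then have "real k * z = - (real k * s)" by (simp add: s_def)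
    then show ?thesis by simp
  qed (simp add: s_def)
  also have "\<dots> = min (real k * s) (1 - real k * s)"
    unfolding T_abs_def using k_gt ks by (subst frac_eq_id) auto
  finally have "T_abs (of_nat k * y) > 1/4" using k_gt ks by simp
  then show ?thesis using that[of k] k_le s by (simp add: k_def)
qed

lemma Ints_if_multiples_T_abs_lt_quarter:
  assumes "\<And>j::nat. j \<ge> 1 \<Longrightarrow> T_abs (of_nat j * y) < 1/4"
  shows "y \<in> \<int>"
proof (rule ccontr)
  assume "y \<notin> \<int>"
  then have "T_abs y > 0" using T_abs_eq_0_iff T_abs_nonneg by (metis order_le_less)
  then obtain k :: nat where "k \<ge> 1" "T_abs (of_nat k * y) > 1/4"
    by (rule exists_multiple_T_abs_gt_quarter)
  with assms show False by fastforce
qed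

lemma openin_T_top: "openin T_top U \<longleftrightarrow> U \<subseteq> {x. 0 \<le> x \<and> x < 1} \<and> open {x. frac x \<in> U}"
proof -
  have "open {x. frac x \<in> S \<inter> T}" if "open {x. frac x \<in> S}" "open {x. frac x \<in> T}" for S T
    using open_Int[OF that] by (simp add: Collect_conj_eq)
  moreover have "open {x. frac x \<in> \<Union>K}" if "\<forall>S\<in>K. open {x. frac x \<in> S}" for K
  proof -
    have "{x. frac x \<in> \<Union>K} = (\<Union>S\<in>K. {x. frac x \<in> S})" by auto
    then show ?thesis using that by auto
  qed
  ultimately have "istopology (\<lambda>U. U \<subseteq> {x::real. 0 \<le> x \<and> x < 1} \<and> open {x. frac x \<in> U})"
    unfolding istopology_def by blast
  then show ?thesis unfolding T_top_def by simp
qed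

lemma topspace_T_top [simp]: "topspace T_top = {x. 0 \<le> x \<and> x < 1}"
proof -
  have "openin T_top {x. 0 \<le> x \<and> x < 1}" unfolding openin_T_top by (simp add: frac_lt_1)
  then show ?thesis using openin_subset openin_T_top[of "topspace T_top"] by blast
qed

lemma carrier_T_grp [simp]: "carrier T_grp = {x. 0 \<le> x \<and> x < 1}"
  and mult_T_grp [simp]: "x \<otimes>\<^bsub>T_grp\<^esub> y = frac (x + y)"
  and one_T_grp [simp]: "\<one>\<^bsub>T_grp\<^esub> = 0"
  by (simp_all add: T_grp_def)

lemma frac_of_int_mult_frac [simp]: "frac (of_int k * frac x) = frac (of_int k * x)"
proof -
  have "of_int k * x = of_int k * frac x + of_int (k * floor x)"
    by (simp add: frac_def algebra_simps)
  then show ?thesis by (metis frac_add_of_int_right)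
qed

lemma openin_T_top_frac_image:
  assumes "open B"
  shows "openin T_top (frac ` B)"
  unfolding openin_T_top
proof
  show "frac ` B \<subseteq> {x. 0 \<le> x \<and> x < 1}" by (auto simp: frac_lt_1)
  show "open {x. frac x \<in> frac ` B}"
    unfolding open_dist
  proof (intro ballI)
    fix z assume "z \<in> {x. frac x \<in> frac ` B}"
    then obtain b where b: "b \<in> B" "frac z = frac b" by auto
    obtain m where zb: "z = b + of_int m" using b(2) by (rule frac_eqE)
    obtain e where e: "e > 0" "\<forall>y. dist y b < e \<longrightarrow> y \<in> B"
      using assms b(1) unfolding open_dist by blast
    have "frac y \<in> frac ` B" if "dist y z < e" for y
    proof
      show "frac y = frac (y + of_int (- m))" by (simp only: frac_add_of_int_right)
      show "y + of_int (- m) \<in> B" using e(2) that zb by (simp add: dist_real_def)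
    qed
    then show "\<exists>e>0. \<forall>y. dist y z < e \<longrightarrow> y \<in> {x. frac x \<in> frac ` B}"
      using e(1) by auto
  qed
qed

lemma openin_T_topE:
  assumes "openin T_top V" "frac z0 \<in> V"
  obtains e where "e > 0" "\<And>z. \<bar>z - z0\<bar> < e \<Longrightarrow> frac z \<in> V"
proof -
  have "open {x. frac x \<in> V}" "z0 \<in> {x. frac x \<in> V}" using assms openin_T_top by auto
  then obtain e where "e > 0" "\<forall>y. dist y z0 < e \<longrightarrow> y \<in> {x. frac x \<in> V}"
    unfolding open_dist by blast
  then show ?thesis using that by (auto simp: dist_real_def)
qed

lemma openin_T_top_T_abs_less: "openin T_top {s. 0 \<le> s \<and> s < 1 \<and> T_abs s < r}"
proof -
  have "frac ` ball 0 r = {s. 0 \<le> s \<and> s < 1 \<and> T_abs s < r}"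
  proof (intro equalityI subsetI)
    fix s :: real assume "s \<in> frac ` ball 0 r"
    then obtain z where "\<bar>z\<bar> < r" "s = frac z" by auto
    then show "s \<in> {s. 0 \<le> s \<and> s < 1 \<and> T_abs s < r}"
      using T_abs_le_abs[of z] by (simp add: frac_lt_1)
  next
    fix s assume s: "s \<in> {s. 0 \<le> s \<and> s < 1 \<and> T_abs s < r}"
    then have "s - of_int (round s) \<in> ball 0 r" by (simp add: T_abs_eq_dist_round)
    moreover have "frac (s - of_int (round s)) = s"
      using s frac_add_of_int_right[of s "- round s"] by (simp add: frac_eq)
    ultimately show "s \<in> frac ` ball 0 r" by (metis image_eqI)
  qed
  then show ?thesis using openin_T_top_frac_image[of "ball 0 r"] by simp
qed

lemma continuous_map_T_top_lift:
  assumes "\<And>x. G (frac x) = frac (F x)" "continuous_on UNIV F"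
  shows "continuous_map T_top T_top G"
  unfolding continuous_map_def
proof (intro conjI allI impI)
  show "G \<in> topspace T_top \<rightarrow> topspace T_top"
  proof
    fix x assume "x \<in> topspace T_top"
    then have "G x = frac (F x)" using assms(1)[of x] by (simp add: frac_eq)
    then show "G x \<in> topspace T_top" by (simp add: frac_lt_1)
  qed
  fix U assume U: "openin T_top U"
  have "{x. frac x \<in> {x \<in> topspace T_top. G x \<in> U}} = F -` {x. frac x \<in> U}"
    using assms(1) by (auto simp: frac_lt_1)
  moreover have "open (F -` {x. frac x \<in> U})"
    using assms(2) U openin_T_top open_vimage by blast
  ultimately show "openin T_top {x \<in> topspace T_top. G x \<in> U}"
    unfolding openin_T_top by auto
qed

lemma continuous_map_T_top_int_mult: "continuous_map T_top T_top (\<lambda>t. frac (of_int k * t))"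
  by (rule continuous_map_T_top_lift[where F="\<lambda>x. of_int k * x"]) (simp_all add: continuous_intros)

lemma continuous_map_T_top_add:
  "continuous_map (prod_topology T_top T_top) T_top (\<lambda>(x, y). frac (x + y))"
  unfolding continuous_map_def
proof (intro conjI allI impI)
  show "(\<lambda>(x, y). frac (x + y)) \<in> topspace (prod_topology T_top T_top) \<rightarrow> topspace T_top"
    by (auto simp: frac_lt_1)
  fix W assume W: "openin T_top W"
  let ?S = "{p \<in> topspace (prod_topology T_top T_top). (\<lambda>(x, y). frac (x + y)) p \<in> W}"
  show "openin (prod_topology T_top T_top) ?S"
    unfolding openin_prod_topology_alt
  proof (intro allI impI)
    fix x y assume "(x, y) \<in> ?S"
    then have xy: "0 \<le> x" "x < 1" "0 \<le> y" "y < 1" "frac (x + y) \<in> W" by auto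
    obtain e where e: "e > 0" "\<And>z. \<bar>z - (x + y)\<bar> < e \<Longrightarrow> frac z \<in> W"
      using openin_T_topE[OF W xy(5)] by blast
    have "(frac a, frac b) \<in> ?S" if "a \<in> ball x (e/2)" "b \<in> ball y (e/2)" for a b
    proof -
      have "\<bar>(a + b) - (x + y)\<bar> < e"
        using that by (simp add: dist_real_def abs_if split: if_splits)
      then show ?thesis using e(2) by (simp add: frac_lt_1)
    qed
    moreover have "u \<in> frac ` ball u (e/2)" if "0 \<le> u" "u < 1" for u :: real
      by (rule image_eqI[where x=u]) (use that e(1) in \<open>simp_all add: frac_eq\<close>)
    ultimately show "\<exists>U V. openin T_top U \<and> openin T_top V \<and> x \<in> U \<and> y \<in> V \<and> U \<times> V \<subseteq> ?S"
      using xy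
      by (intro exI[of _ "frac ` ball x (e/2)"] exI[of _ "frac ` ball y (e/2)"] conjI subsetI)
        (auto simp: openin_T_top_frac_image)
  qed
qed

lemma comm_group_T_grp: "comm_group T_grp"
proof (rule comm_groupI)
  fix x y z assume xyz: "x \<in> carrier T_grp" "y \<in> carrier T_grp" "z \<in> carrier T_grp"
  show "x \<otimes>\<^bsub>T_grp\<^esub> y \<in> carrier T_grp" by (simp add: frac_lt_1)
  have "frac (frac (x + y) + z) = frac (x + frac (y + z))"
    by (simp add: add.assoc)
  then show "x \<otimes>\<^bsub>T_grp\<^esub> y \<otimes>\<^bsub>T_grp\<^esub> z = x \<otimes>\<^bsub>T_grp\<^esub> (y \<otimes>\<^bsub>T_grp\<^esub> z)"
    by simp
  show "x \<otimes>\<^bsub>T_grp\<^esub> y = y \<otimes>\<^bsub>T_grp\<^esub> x" by (simp add: add.commute)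
  show "\<one>\<^bsub>T_grp\<^esub> \<otimes>\<^bsub>T_grp\<^esub> x = x" using xyz by (simp add: frac_eq)
  have "frac (frac (- x) + x) = 0" by simp
  then show "\<exists>y\<in>carrier T_grp. y \<otimes>\<^bsub>T_grp\<^esub> x = \<one>\<^bsub>T_grp\<^esub>"
    by (intro bexI[where x="frac (-x)"]) (simp_all add: frac_lt_1)
qed simp

interpretation T: comm_group T_grp
  by (rule comm_group_T_grp)

lemma inv_T_grp: "x \<in> carrier T_grp \<Longrightarrow> inv\<^bsub>T_grp\<^esub> x = frac (- x)"
  by (rule T.inv_equality) (auto simp: frac_lt_1)

lemma nat_pow_T_grp: "x \<in> carrier T_grp \<Longrightarrow> x [^]\<^bsub>T_grp\<^esub> (n::nat) = frac (of_nat n * x)"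
  by (induction n) (simp_all add: algebra_simps)

lemma int_pow_T_grp:
  assumes x: "x \<in> carrier T_grp"
  shows "x [^]\<^bsub>T_grp\<^esub> (k::int) = frac (of_int k * x)"
proof (cases k rule: int_cases2)
  case (nonneg n)
  then show ?thesis using x by (simp add: int_pow_int nat_pow_T_grp)
next
  case (nonpos n)
  have "x [^]\<^bsub>T_grp\<^esub> k = inv\<^bsub>T_grp\<^esub> (frac (of_nat n * x))"
    using x by (simp add: nonpos T.int_pow_neg int_pow_int nat_pow_T_grp)
  also have "\<dots> = frac (- frac (of_nat n * x))" by (rule inv_T_grp) (simp add: frac_lt_1)
  finally show ?thesis by (simp add: nonpos frac_neg_frac)
qed

lemma group_hom_into_T_grp: "group G \<Longrightarrow> h \<in> hom G T_grp \<Longrightarrow> group_hom G T_grp h"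
  by (simp add: group_hom_def group_hom_axioms_def T.is_group)

lemma top_ab_group_T: "top_ab_group T_grp T_top"
  unfolding top_ab_group_def
proof (intro conjI)
  show "continuous_map (prod_topology T_top T_top) T_top (\<lambda>(x, y). x \<otimes>\<^bsub>T_grp\<^esub> y)"
    using continuous_map_T_top_add by simp
  have "continuous_map T_top T_top (\<lambda>t. frac (- t))"
    by (rule continuous_map_T_top_lift[where F="\<lambda>x. - x"])
      (simp_all add: frac_neg_frac continuous_on_minus)
  then show "continuous_map T_top T_top (\<lambda>x. inv\<^bsub>T_grp\<^esub> x)"
    by (rule continuous_map_eq) (simp add: inv_T_grp)
qed (simp_all add: comm_group_T_grp)

lemma Hausdorff_space_T_top: "Hausdorff_space T_top"
  unfolding Hausdorff_space_def
proof (intro allI impI)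
  fix x y assume xy: "x \<in> topspace T_top \<and> y \<in> topspace T_top \<and> x \<noteq> y"
  have "x - y \<notin> \<int>"
  proof
    assume "x - y \<in> \<int>"
    then obtain m where m: "x - y = of_int m" by (auto elim: Ints_cases)
    then have "-1 < real_of_int m" "real_of_int m < 1" using xy by auto
    then have "m = 0" by simp
    then show False using m xy by simp
  qed
  then have "T_abs (x - y) > 0" using T_abs_eq_0_iff T_abs_nonneg by (metis order_le_less)
  define r where "r = T_abs (x - y) / 2"
  have "disjnt (frac ` ball x r) (frac ` ball y r)"
    unfolding disjnt_def
  proof (rule ccontr)
    assume "frac ` ball x r \<inter> frac ` ball y r \<noteq> {}"
    then obtain a b where ab: "a \<in> ball x r" "b \<in> ball y r" "frac a = frac b" by auto
    obtain m where "a = b + of_int m" using ab(3) by (rule frac_eqE)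
    then have "x - y = (x - a) + (b - y) + of_int m" by simp
    then have "T_abs (x - y) = T_abs ((x - a) + (b - y))" by (simp only: T_abs_add_of_int)
    also have "\<dots> \<le> T_abs (x - a) + T_abs (b - y)" by (rule T_abs_triangle)
    also have "\<dots> \<le> \<bar>x - a\<bar> + \<bar>b - y\<bar>" by (intro add_mono T_abs_le_abs)
    also have "\<dots> < 2 * r" using ab(1,2) by (simp add: dist_real_def abs_minus_commute)
    finally show False by (simp add: r_def)
  qed
  moreover have "u \<in> frac ` ball u r" if "u \<in> topspace T_top" for u
    by (rule image_eqI[where x=u]) (use that \<open>T_abs (x - y) > 0\<close> in \<open>simp_all add: r_def frac_eq\<close>)
  ultimately show "\<exists>U V. openin T_top U \<and> openin T_top V \<and> x \<in> U \<and> y \<in> V \<and> disjnt U V"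
    using xy by (intro exI[of _ "frac ` ball x r"] exI[of _ "frac ` ball y r"])
      (simp add: openin_T_top_frac_image)
qed

lemma int_mult_hom_T_grp: "(\<lambda>t. frac (of_int k * t)) \<in> hom T_grp T_grp"
proof (rule homI)
  fix x y assume "x \<in> carrier T_grp" "y \<in> carrier T_grp"
  have "frac (of_int k * frac (x + y)) = frac (frac (of_int k * x) + frac (of_int k * y))"
    by (simp add: algebra_simps)
  then show "frac (of_int k * (x \<otimes>\<^bsub>T_grp\<^esub> y)) = frac (of_int k * x) \<otimes>\<^bsub>T_grp\<^esub> frac (of_int k * y)"
    by simp
qed (simp add: frac_lt_1)

lemma int_mult_characters_T: "(\<lambda>t. frac (of_int k * t)) \<in> characters T_grp T_top"
  unfolding characters_def using int_mult_hom_T_grp continuous_map_T_top_int_mult by blast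

text \<open>A point g outside the set is detected by the least multiple k g with T_abs (k g) > 1/4;
  minimality bounds k by m, so the same character keeps the set inside T_abs \<le> 1/4.\<close>
lemma quasi_convex_T_abs_le:
  assumes m: "m \<ge> 1"
  shows "quasi_convex T_grp T_top {t. 0 \<le> t \<and> t < 1 \<and> T_abs t \<le> 1 / (4 * real m)}"
    (is "quasi_convex _ _ ?V")
  unfolding quasi_convex_def
proof (intro conjI ballI)
  show "?V \<subseteq> carrier T_grp" by auto
  fix g assume g: "g \<in> carrier T_grp - ?V"
  then have gr: "T_abs g > 1 / (4 * real m)" by auto
  moreover have "1 / (4 * real m) > 0" using m by simp
  ultimately obtain k :: nat
    where k: "k \<ge> 1" "(real k - 1) * T_abs g \<le> 1/4" "T_abs (of_nat k * g) > 1/4"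
    using exists_multiple_T_abs_gt_quarter by (metis order.strict_trans)
  have "(real k - 1) * (1 / (4 * real m)) < 1/4"
  proof (cases "k = 1")
    case False
    then have "(real k - 1) * (1 / (4 * real m)) < (real k - 1) * T_abs g"
      using k(1) gr by (intro mult_strict_left_mono) auto
    then show ?thesis using k(2) by linarith
  qed simp
  then have km: "real k \<le> real m" using m by (simp add: field_simps)
  show "\<exists>chi\<in>characters T_grp T_top. (\<forall>a\<in>?V. T_abs (chi a) \<le> 1/4) \<and> T_abs (chi g) > 1/4"
  proof (intro bexI[OF _ int_mult_characters_T[of "int k"]] conjI ballI)
    show "T_abs (frac (of_int (int k) * g)) > 1/4" using k(3) by simp
    fix a assume a: "a \<in> ?V"
    have "T_abs (frac (of_int (int k) * a)) \<le> real k * T_abs a"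
      using T_abs_of_nat_mult_le[of k a] by simp
    also have "\<dots> \<le> real m * (1 / (4 * real m))"
      using a km T_abs_nonneg[of a] by (intro mult_mono) auto
    also have "\<dots> = 1/4" using m by simp
    finally show "T_abs (frac (of_int (int k) * a)) \<le> 1/4" .
  qed
qed

lemma in_Q_T: "in_Q T_grp T_top"
  unfolding in_Q_def
proof (intro conjI allI impI)
  show "top_ab_group T_grp T_top" by (rule top_ab_group_T)
  show "Hausdorff_space T_top" by (rule Hausdorff_space_T_top)
  fix W assume "nbhd_of_one T_grp T_top W"
  then obtain U where U: "openin T_top U" "frac 0 \<in> U" "U \<subseteq> W"
    unfolding nbhd_of_one_def by auto
  obtain e where e: "e > 0" "\<And>z. \<bar>z - 0\<bar> < e \<Longrightarrow> frac z \<in> U"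
    using openin_T_topE[OF U(1,2)] by blast
  obtain m :: nat where m: "m > 0" "inverse (real m) < e"
    using ex_inverse_of_nat_less[OF e(1)] by blast
  define r where "r = 1 / (4 * real m)"
  have r: "r > 0" "r < e" using m by (simp_all add: r_def field_simps)
  define V where "V = {t. 0 \<le> t \<and> t < 1 \<and> T_abs t \<le> r}"
  have "nbhd_of_one T_grp T_top V"
    unfolding nbhd_of_one_def V_def
    using openin_T_top_T_abs_less[of r] r
    by (intro exI[of _ "{s. 0 \<le> s \<and> s < 1 \<and> T_abs s < r}"]) (auto simp: T_abs_def)
  moreover have "quasi_convex T_grp T_top V"
    unfolding V_def r_def using m by (intro quasi_convex_T_abs_le) simp
  moreover have "V \<subseteq> W"
  proof
    fix t assume t: "t \<in> V"
    then have "frac (t - of_int (round t)) \<in> U"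
      using r by (intro e(2)) (simp add: V_def T_abs_eq_dist_round)
    moreover have "frac (t - of_int (round t)) = t"
      using t frac_add_of_int_right[of t "- round t"] by (simp add: V_def frac_eq)
    ultimately show "t \<in> W" using U(3) by auto
  qed
  ultimately show "\<exists>V. nbhd_of_one T_grp T_top V \<and> quasi_convex T_grp T_top V \<and> V \<subseteq> W"
    by blast
qed

section \<open>Continuous endomorphisms of the circle\<close>

text \<open>\<phi> represents a homomorphism from the reals to T = R/Z by its values in [0, 1);
  the last assumption is continuity at 0.\<close>
locale real_to_T_hom =
  fixes \<phi> :: "real \<Rightarrow> real" and \<delta> :: real
  assumes range: "0 \<le> \<phi> x \<and> \<phi> x < 1"
    and add: "\<phi> (x + y) = frac (\<phi> x + \<phi> y)"
    and \<delta>_pos: "\<delta> > 0"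
    and small: "\<bar>x\<bar> < \<delta> \<Longrightarrow> T_abs (\<phi> x) < 1/8"
begin

lemma frac_\<phi> [simp]: "frac (\<phi> x) = \<phi> x"
  using range by (simp add: frac_eq)

lemma \<phi>_zero [simp]: "\<phi> 0 = 0"
proof -
  have "frac (\<phi> 0 + \<phi> 0) = \<phi> 0" using add[of 0 0] by simp
  then have "\<phi> 0 \<in> \<int>" unfolding frac_unique_iff by simp
  then show ?thesis by (metis frac_\<phi> frac_eq_0_iff)
qed

lemma of_nat_mult: "\<phi> (of_nat j * x) = frac (of_nat j * \<phi> x)"
proof (induction j)
  case (Suc j)
  have "\<phi> (of_nat (Suc j) * x) = frac (\<phi> (of_nat j * x) + \<phi> x)"
    using add[of "of_nat j * x" x] by (simp add: algebra_simps)
  then show ?case using Suc by (simp add: algebra_simps)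
qed simp

definition lift :: "real \<Rightarrow> real" where
  "lift x = \<phi> x - of_int (round (\<phi> x))"

lemma frac_lift: "frac (lift x) = \<phi> x"
  using frac_add_of_int_right[of "\<phi> x" "- round (\<phi> x)"] by (simp add: lift_def)

lemma abs_lift_less: "\<bar>x\<bar> < \<delta> \<Longrightarrow> \<bar>lift x\<bar> < 1/8"
  using small by (simp add: lift_def T_abs_eq_dist_round)

lemma lift_add:
  assumes "\<bar>x\<bar> < \<delta>" "\<bar>y\<bar> < \<delta>" "\<bar>x + y\<bar> < \<delta>"
  shows "lift (x + y) = lift x + lift y"
proof -
  have "frac (lift (x + y)) = frac (frac (lift x) + frac (lift y))"
    by (simp only: frac_lift add)
  then have "frac (lift (x + y)) = frac (lift x + lift y)" by simp
  then obtain m where m: "lift (x + y) = lift x + lift y + of_int m" by (rule frac_eqE)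
  have "\<bar>real_of_int m\<bar> < 1"
    using m abs_lift_less[OF assms(1)] abs_lift_less[OF assms(2)] abs_lift_less[OF assms(3)]
    by linarith
  then show ?thesis using m by simp
qed

lemma lift_of_nat_mult:
  assumes "0 \<le> x" "of_nat j * x < \<delta>"
  shows "lift (of_nat j * x) = of_nat j * lift x"
  using assms(2)
proof (induction j)
  case 0
  then show ?case by (simp add: lift_def)
next
  case (Suc j)
  have "0 \<le> of_nat j * x" "of_nat j * x + x < \<delta>"
    using assms(1) Suc.prems by (simp_all add: algebra_simps)
  then have "of_nat j * x < \<delta>" "x < \<delta>" using assms(1) by linarith+
  then have "\<bar>of_nat j * x\<bar> < \<delta>" "\<bar>x\<bar> < \<delta>" "\<bar>of_nat j * x + x\<bar> < \<delta>"
    using assms(1) \<open>of_nat j * x + x < \<delta>\<close> by simp_all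
  then have "lift (of_nat j * x + x) = lift (of_nat j * x) + lift x" by (rule lift_add)
  then show ?case using Suc.IH \<open>of_nat j * x < \<delta>\<close> by (simp add: algebra_simps)
qed

lemma abs_lift_less_inverse:
  assumes "0 \<le> x" "j \<ge> 1" "of_nat j * x < \<delta>"
  shows "\<bar>lift x\<bar> < 1 / (8 * of_nat j)"
proof -
  have "of_nat j * \<bar>lift x\<bar> = \<bar>lift (of_nat j * x)\<bar>"
    using lift_of_nat_mult[OF assms(1,3)] by (simp add: abs_mult)
  also have "\<dots> < 1/8" using assms by (intro abs_lift_less) simp
  finally show ?thesis using assms(2) by (simp add: field_simps)
qed

definition slope :: real where
  "slope = lift (\<delta>/2) / (\<delta>/2)"

text \<open>Compare z with the grid point p h below it, h = (\<delta>/2)/K: on the grid lift is exactly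
  linear, and the remainder d < h contributes less than a multiple of 1/K.\<close>
lemma abs_lift_sub_slope_le:
  assumes z: "0 \<le> z" "z \<le> \<delta>/2" and K: "K \<ge> 1"
  shows "\<bar>lift z - slope * z\<bar> \<le> (1/8 + \<bar>slope\<bar> * (\<delta>/2)) / of_nat K"
proof -
  define h where "h = (\<delta>/2) / of_nat K"
  define p where "p = nat \<lfloor>z / h\<rfloor>"
  define d where "d = z - of_nat p * h"
  have h: "h > 0" "h \<le> \<delta>/2" "of_nat K * h = \<delta>/2"
    using \<delta>_pos K by (simp_all add: h_def divide_le_eq_1 field_simps)
  have "of_nat p \<le> z / h" "z / h < of_nat p + 1"
    using z h by (simp_all add: p_def)
  then have d: "0 \<le> d" "d < h" "of_nat p * h \<le> z"
    using h by (simp_all add: d_def field_simps)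
  have "lift (\<delta>/2) = of_nat K * lift h" using lift_of_nat_mult[of h K] h \<delta>_pos by simp
  then have grid: "lift (of_nat p * h) = slope * (of_nat p * h)"
    using lift_of_nat_mult[of h p] h \<delta>_pos d z by (simp add: slope_def field_simps)
  have "lift z = lift (of_nat p * h) + lift d"
    using lift_add[of "of_nat p * h" d] d h \<delta>_pos z by (simp add: d_def)
  then have "\<bar>lift z - slope * z\<bar> = \<bar>lift d - slope * d\<bar>"
    using grid by (simp add: d_def algebra_simps)
  also have "\<dots> \<le> \<bar>lift d\<bar> + \<bar>slope\<bar> * d"
    using abs_triangle_ineq4[of "lift d" "slope * d"] d by (simp add: abs_mult)
  also have "\<bar>lift d\<bar> < 1 / (8 * of_nat K)"
  proof (rule abs_lift_less_inverse)
    have "of_nat K * d < of_nat K * h" using d K by (intro mult_strict_left_mono) simp_all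
    then show "of_nat K * d < \<delta>" using h \<delta>_pos by linarith
  qed (use d K in simp_all)
  also have "\<bar>slope\<bar> * d \<le> \<bar>slope\<bar> * h" using d by (simp add: mult_left_mono)
  finally show ?thesis using K by (simp add: h_def field_simps)
qed

lemma lift_eq_slope_mult:
  assumes "0 \<le> z" "z \<le> \<delta>/2"
  shows "lift z = slope * z"
proof (rule ccontr)
  let ?e = "\<bar>lift z - slope * z\<bar>" and ?C = "1/8 + \<bar>slope\<bar> * (\<delta>/2)"
  assume "lift z \<noteq> slope * z"
  then have e: "?e > 0" by simp
  obtain K :: nat where K: "?C / ?e < of_nat K"
    using reals_Archimedean2 by blast
  moreover have "0 \<le> ?C / ?e" using \<delta>_pos by simp
  ultimately have "K \<ge> 1" by linarith
  then have "?e * of_nat K \<le> ?C"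
    using abs_lift_sub_slope_le[OF assms] by (simp add: field_simps)
  moreover have "?C < ?e * of_nat K" using K e by (simp add: field_simps)
  ultimately show False by simp
qed

lemma eq_frac_slope_mult: "\<phi> x = frac (slope * x)"
proof -
  have nonneg: "\<phi> x = frac (slope * x)" if "0 \<le> x" for x
  proof -
    obtain K :: nat where K: "x / (\<delta>/2) < of_nat K" using reals_Archimedean2 by blast
    then have "K > 0" using that \<delta>_pos by (cases K) (simp_all add: field_simps)
    then have "x / of_nat K \<le> \<delta>/2" using K \<delta>_pos by (simp add: field_simps)
    then have "\<phi> (x / of_nat K) = frac (slope * (x / of_nat K))"
      using lift_eq_slope_mult[of "x / of_nat K"] frac_lift[of "x / of_nat K"] that by simp
    moreover have "\<phi> x = frac (of_nat K * \<phi> (x / of_nat K))"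
      using of_nat_mult[of K "x / of_nat K"] \<open>K > 0\<close> by simp
    ultimately show ?thesis
      using frac_of_int_mult_frac[of "int K" "slope * (x / of_nat K)"] \<open>K > 0\<close> by simp
  qed
  show ?thesis
  proof (cases "x \<ge> 0")
    case False
    have "\<phi> x + \<phi> (- x) \<in> \<int>"
      using add[of x "- x"] unfolding frac_unique_iff by simp
    moreover have "\<phi> (- x) - slope * (- x) \<in> \<int>"
      using nonneg[of "- x"] False by (simp add: frac_def)
    moreover have "slope * x - \<phi> x = (\<phi> (- x) - slope * (- x)) - (\<phi> x + \<phi> (- x))" by simp
    ultimately have "slope * x - \<phi> x \<in> \<int>" by (metis Ints_diff)
    then have "frac (slope * x) = \<phi> x" using range[of x] unfolding frac_unique_iff by simp
    then show ?thesis by simp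
  qed (rule nonneg)
qed

end

lemma continuous_endomorphism_T_grp:
  assumes hom: "c \<in> hom T_grp T_grp" and cont: "continuous_map T_top T_top c"
  obtains n :: int where "\<And>t. t \<in> carrier T_grp \<Longrightarrow> c t = frac (of_int n * t)"
proof -
  have c0: "c 0 = 0"
    using group_hom.hom_one[OF group_hom_into_T_grp[OF T.is_group hom]] by simp
  have "openin T_top {x \<in> topspace T_top. c x \<in> {s. 0 \<le> s \<and> s < 1 \<and> T_abs s < 1/8}}"
    using cont openin_T_top_T_abs_less by (rule openin_continuous_map_preimage)
  moreover have "frac 0 \<in> {x \<in> topspace T_top. c x \<in> {s. 0 \<le> s \<and> s < 1 \<and> T_abs s < 1/8}}"
    using c0 by (simp add: T_abs_def)
  ultimately obtain \<delta> where \<delta>: "\<delta> > 0" "\<And>z. \<bar>z\<bar> < \<delta> \<Longrightarrow> T_abs (c (frac z)) < 1/8"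
    by (rule openin_T_topE) auto
  interpret real_to_T_hom "\<lambda>x. c (frac x)" \<delta>
  proof
    show "0 \<le> c (frac x) \<and> c (frac x) < 1" for x
      using hom by (auto simp: hom_def frac_lt_1)
    show "c (frac (x + y)) = frac (c (frac x) + c (frac y))" for x y
      using hom_mult[OF hom, of "frac x" "frac y"] by (simp add: frac_lt_1)
  qed (use \<delta> in auto)
  have "frac slope = 0" using eq_frac_slope_mult[of 1] c0 by simp
  then obtain n where n: "slope = of_int n" by (auto elim: Ints_cases)
  have "c t = frac (of_int n * t)" if "t \<in> carrier T_grp" for t
    using eq_frac_slope_mult[of t] that by (simp add: n frac_eq)
  then show ?thesis by (rule that)
qed

section \<open>The group C_p(X, Z)\<close>

lemma continuous_map_if_locally_constant:
  assumes "\<And>x. x \<in> topspace XX \<Longrightarrow> \<exists>U. openin XX U \<and> x \<in> U \<and> (\<forall>y\<in>U. g y = g x)"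
    and "g \<in> topspace XX \<rightarrow> topspace YY"
  shows "continuous_map XX YY g"
  unfolding continuous_map_def
proof (intro conjI allI impI)
  fix V assume "openin YY V"
  show "openin XX {x \<in> topspace XX. g x \<in> V}"
  proof (subst openin_subopen, intro ballI)
    fix x assume x: "x \<in> {x \<in> topspace XX. g x \<in> V}"
    then obtain U where U: "openin XX U" "x \<in> U" "\<forall>y\<in>U. g y = g x" using assms(1) by blast
    then have "U \<subseteq> {x \<in> topspace XX. g x \<in> V}" using x openin_subset by fastforce
    then show "\<exists>T. openin XX T \<and> x \<in> T \<and> T \<subseteq> {x \<in> topspace XX. g x \<in> V}" using U by blast
  qed
qed (rule assms(2))

lemma continuous_map_discrete_iff_locally_constant:
  "continuous_map XX (discrete_topology UNIV) f \<longleftrightarrow>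
     (\<forall>x\<in>topspace XX. \<exists>U. openin XX U \<and> x \<in> U \<and> (\<forall>y\<in>U. f y = f x))"
proof
  assume c: "continuous_map XX (discrete_topology UNIV) f"
  show "\<forall>x\<in>topspace XX. \<exists>U. openin XX U \<and> x \<in> U \<and> (\<forall>y\<in>U. f y = f x)"
  proof
    fix x assume "x \<in> topspace XX"
    moreover have "openin XX {y \<in> topspace XX. f y \<in> {f x}}"
      using c by (rule openin_continuous_map_preimage) simp
    ultimately show "\<exists>U. openin XX U \<and> x \<in> U \<and> (\<forall>y\<in>U. f y = f x)" by force
  qed
qed (intro continuous_map_if_locally_constant; simp)

lemma carrier_Cp_Z: "f \<in> carrier (Cp_Z XX) \<longleftrightarrow>
    f \<in> extensional (topspace XX) \<and> (\<forall>x\<in>topspace XX. \<exists>U. openin XX U \<and> x \<in> U \<and> (\<forall>y\<in>U. f y = f x))"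
  by (simp add: Cp_Z_def continuous_map_discrete_iff_locally_constant)

lemma mult_Cp_Z: "f \<otimes>\<^bsub>Cp_Z XX\<^esub> g = restrict (\<lambda>x. f x + g x) (topspace XX)"
  and one_Cp_Z: "\<one>\<^bsub>Cp_Z XX\<^esub> = restrict (\<lambda>x. 0) (topspace XX)"
  by (simp_all add: Cp_Z_def)

lemma restrict_in_carrier_Cp_Z:
  assumes "\<And>x. x \<in> topspace XX \<Longrightarrow> \<exists>U. openin XX U \<and> x \<in> U \<and> (\<forall>y\<in>U. h y = h x)"
  shows "restrict h (topspace XX) \<in> carrier (Cp_Z XX)"
  unfolding carrier_Cp_Z
proof (intro conjI ballI)
  fix x assume x: "x \<in> topspace XX"
  then obtain U where U: "openin XX U" "x \<in> U" "\<forall>y\<in>U. h y = h x" using assms by blast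
  then have "U \<subseteq> topspace XX" by (simp add: openin_subset)
  then have "\<forall>y\<in>U. restrict h (topspace XX) y = restrict h (topspace XX) x" using U(3) x by auto
  then show "\<exists>U. openin XX U \<and> x \<in> U \<and>
      (\<forall>y\<in>U. restrict h (topspace XX) y = restrict h (topspace XX) x)"
    using U(1,2) by blast
qed simp

lemma Cp_Z_locally_constantE:
  assumes "f \<in> carrier (Cp_Z XX)" "x \<in> topspace XX"
  obtains U where "openin XX U" "x \<in> U" "\<forall>y\<in>U. f y = f x"
  using assms unfolding carrier_Cp_Z by blast

lemma Cp_Z_extensional: "f \<in> carrier (Cp_Z XX) \<Longrightarrow> f \<in> extensional (topspace XX)"
  by (simp add: Cp_Z_def)

lemma Cp_Z_eqI:
  assumes "f \<in> carrier (Cp_Z XX)" "g \<in> carrier (Cp_Z XX)" "\<And>x. x \<in> topspace XX \<Longrightarrow> f x = g x"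
  shows "f = g"
  by (rule extensionalityI[of _ "topspace XX"]) (use assms in \<open>simp_all add: Cp_Z_extensional\<close>)

lemma Cp_Z_map2_closed:
  assumes f: "f \<in> carrier (Cp_Z XX)" and g: "g \<in> carrier (Cp_Z XX)"
  shows "restrict (\<lambda>x. h (f x) (g x)) (topspace XX) \<in> carrier (Cp_Z XX)"
proof (rule restrict_in_carrier_Cp_Z)
  fix x assume x: "x \<in> topspace XX"
  obtain U where U: "openin XX U" "x \<in> U" "\<forall>y\<in>U. f y = f x" using Cp_Z_locally_constantE[OF f x] .
  obtain V where V: "openin XX V" "x \<in> V" "\<forall>y\<in>V. g y = g x" using Cp_Z_locally_constantE[OF g x] .
  have "h (f y) (g y) = h (f x) (g x)" if "y \<in> U \<inter> V" for y
  proof -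
    have "f y = f x" "g y = g x" using that U(3) V(3) by blast+
    then show ?thesis by simp
  qed
  moreover have "openin XX (U \<inter> V)" "x \<in> U \<inter> V" using U V by auto
  ultimately show "\<exists>W. openin XX W \<and> x \<in> W \<and> (\<forall>y\<in>W. h (f y) (g y) = h (f x) (g x))"
    by blast
qed

lemma Cp_Z_zero_closed: "restrict (\<lambda>x. 0) (topspace XX) \<in> carrier (Cp_Z XX)"
  by (rule restrict_in_carrier_Cp_Z, rule exI[of _ "topspace XX"]) simp

lemma comm_group_Cp_Z: "comm_group (Cp_Z XX)"
proof (rule comm_groupI)
  fix f g h
  assume f: "f \<in> carrier (Cp_Z XX)" and g: "g \<in> carrier (Cp_Z XX)" and "h \<in> carrier (Cp_Z XX)"
  show "f \<otimes>\<^bsub>Cp_Z XX\<^esub> g \<in> carrier (Cp_Z XX)" unfolding mult_Cp_Z using f g by (rule Cp_Z_map2_closed)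
  show "f \<otimes>\<^bsub>Cp_Z XX\<^esub> g \<otimes>\<^bsub>Cp_Z XX\<^esub> h = f \<otimes>\<^bsub>Cp_Z XX\<^esub> (g \<otimes>\<^bsub>Cp_Z XX\<^esub> h)"
    unfolding mult_Cp_Z by (auto simp: fun_eq_iff restrict_def)
  show "f \<otimes>\<^bsub>Cp_Z XX\<^esub> g = g \<otimes>\<^bsub>Cp_Z XX\<^esub> f"
    unfolding mult_Cp_Z by (auto simp: fun_eq_iff restrict_def)
  have "\<one>\<^bsub>Cp_Z XX\<^esub> \<otimes>\<^bsub>Cp_Z XX\<^esub> f = restrict f (topspace XX)"
    unfolding mult_Cp_Z one_Cp_Z by (auto simp: fun_eq_iff restrict_def)
  then show "\<one>\<^bsub>Cp_Z XX\<^esub> \<otimes>\<^bsub>Cp_Z XX\<^esub> f = f"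
    using extensional_restrict[OF Cp_Z_extensional[OF f]] by simp
  have "restrict (\<lambda>x. - 1 * f x) (topspace XX) \<otimes>\<^bsub>Cp_Z XX\<^esub> f = \<one>\<^bsub>Cp_Z XX\<^esub>"
    unfolding mult_Cp_Z one_Cp_Z by (auto simp: fun_eq_iff restrict_def)
  then show "\<exists>g\<in>carrier (Cp_Z XX). g \<otimes>\<^bsub>Cp_Z XX\<^esub> f = \<one>\<^bsub>Cp_Z XX\<^esub>"
    using Cp_Z_map2_closed[OF f f, of "\<lambda>a b. - 1 * a"] by blast
qed (simp add: one_Cp_Z Cp_Z_zero_closed)

interpretation Cp_Z: comm_group "Cp_Z XX"
  by (rule comm_group_Cp_Z)

lemma nat_pow_Cp_Z:
  "f \<in> carrier (Cp_Z XX) \<Longrightarrow> f [^]\<^bsub>Cp_Z XX\<^esub> (n::nat) = restrict (\<lambda>x. int n * f x) (topspace XX)"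
  by (induction n) (auto simp: one_Cp_Z mult_Cp_Z fun_eq_iff restrict_def algebra_simps)

lemma int_pow_Cp_Z:
  assumes f: "f \<in> carrier (Cp_Z XX)"
  shows "f [^]\<^bsub>Cp_Z XX\<^esub> (k::int) = restrict (\<lambda>x. k * f x) (topspace XX)"
proof (cases k rule: int_cases2)
  case (nonneg n)
  then show ?thesis using f by (simp add: int_pow_int nat_pow_Cp_Z)
next
  case (nonpos n)
  have "restrict (\<lambda>x. k * f x) (topspace XX) \<otimes>\<^bsub>Cp_Z XX\<^esub> f [^]\<^bsub>Cp_Z XX\<^esub> n = \<one>\<^bsub>Cp_Z XX\<^esub>"
    using f by (auto simp: nonpos nat_pow_Cp_Z mult_Cp_Z one_Cp_Z fun_eq_iff)
  then have "inv\<^bsub>Cp_Z XX\<^esub> (f [^]\<^bsub>Cp_Z XX\<^esub> n) = restrict (\<lambda>x. k * f x) (topspace XX)"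
    using f Cp_Z_map2_closed[OF f f, of "\<lambda>a b. k * a"] by (intro Cp_Z.inv_equality) simp_all
  then show ?thesis using f by (simp add: nonpos Cp_Z.int_pow_neg int_pow_int)
qed

lemma topspace_Cp_Z_top [simp]: "topspace (Cp_Z_top XX) = carrier (Cp_Z XX)"
proof -
  have "carrier (Cp_Z XX) \<subseteq> topspace (product_topology (\<lambda>_. discrete_topology UNIV) (topspace XX))"
    by (auto simp: Cp_Z_extensional PiE_def)
  then show ?thesis unfolding Cp_Z_top_def by auto
qed

lemma openin_Cp_Z_top_agree_on_finite:
  assumes "finite F" "F \<subseteq> topspace XX"
  shows "openin (Cp_Z_top XX) {f \<in> carrier (Cp_Z XX). \<forall>x\<in>F. f x = f0 x}"
proof -
  define T where "T = {f \<in> topspace (product_topology (\<lambda>_. discrete_topology (UNIV::int set))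
    (topspace XX)).
    \<forall>x\<in>F. f x = f0 x}"
  have "openin (product_topology (\<lambda>_. discrete_topology UNIV) (topspace XX)) T"
    unfolding openin_product_topology_alt
  proof
    fix f assume f: "f \<in> T"
    define U where "U i = (if i \<in> F then {f0 i} else UNIV)" for i
    have "{i \<in> topspace XX. U i \<noteq> topspace (discrete_topology UNIV)} \<subseteq> F" by (auto simp: U_def)
    then have "finite {i \<in> topspace XX. U i \<noteq> topspace (discrete_topology UNIV)}"
      using assms(1) finite_subset by blast
    moreover have "f \<in> Pi\<^sub>E (topspace XX) U" "Pi\<^sub>E (topspace XX) U \<subseteq> T"
      using f assms(2) by (auto simp: T_def U_def PiE_def Pi_def)
    ultimately show "\<exists>U. finite {i \<in> topspace XX. U i \<noteq> topspace (discrete_topology UNIV)} \<and>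
        (\<forall>i\<in>topspace XX. openin (discrete_topology UNIV) (U i)) \<and> f \<in> Pi\<^sub>E (topspace XX) U \<and>
        Pi\<^sub>E (topspace XX) U \<subseteq> T"
      by (intro exI[of _ U]) simp
  qed
  moreover have "{f \<in> carrier (Cp_Z XX). \<forall>x\<in>F. f x = f0 x} = T \<inter> carrier (Cp_Z XX)"
    by (auto simp: T_def Cp_Z_extensional PiE_def)
  ultimately show ?thesis unfolding Cp_Z_top_def openin_subtopology by blast
qed

lemma Cp_Z_top_nbhdE:
  assumes "openin (Cp_Z_top XX) U" "f0 \<in> U"
  obtains F where "finite F" "F \<subseteq> topspace XX" "{f \<in> carrier (Cp_Z XX). \<forall>x\<in>F. f x = f0 x} \<subseteq> U"
proof -
  obtain T
    where T: "openin (product_topology (\<lambda>_. discrete_topology (UNIV::int set)) (topspace XX)) T"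
    "U = T \<inter> carrier (Cp_Z XX)"
    using assms(1) unfolding Cp_Z_top_def openin_subtopology by blast
  then obtain V where V: "finite {i \<in> topspace XX. V i \<noteq> UNIV}"
    "f0 \<in> Pi\<^sub>E (topspace XX) V" "Pi\<^sub>E (topspace XX) V \<subseteq> T"
    using assms(2) unfolding openin_product_topology_alt by auto
  define F where "F = {i \<in> topspace XX. V i \<noteq> UNIV}"
  have "f \<in> U" if f: "f \<in> carrier (Cp_Z XX)" "\<forall>x\<in>F. f x = f0 x" for f
  proof -
    have "f \<in> Pi\<^sub>E (topspace XX) V"
      using f V(2) by (auto simp: Cp_Z_extensional PiE_def Pi_def F_def)
    then show ?thesis using V(3) T(2) f by blast
  qed
  moreover have "finite F" "F \<subseteq> topspace XX" using V(1) by (simp_all add: F_def)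
  ultimately show ?thesis using that by blast
qed

definition indicator_Cp_Z :: "'a topology \<Rightarrow> 'a set \<Rightarrow> 'a \<Rightarrow> int" where
  "indicator_Cp_Z XX E = restrict (\<lambda>y. if y \<in> E then 1 else 0) (topspace XX)"

lemma indicator_Cp_Z_in_carrier:
  assumes "openin XX E" "closedin XX E"
  shows "indicator_Cp_Z XX E \<in> carrier (Cp_Z XX)"
  unfolding indicator_Cp_Z_def
proof (rule restrict_in_carrier_Cp_Z)
  fix x assume x: "x \<in> topspace XX"
  show "\<exists>U. openin XX U \<and> x \<in> U \<and>
      (\<forall>y\<in>U. (if y \<in> E then 1 else 0) = (if x \<in> E then 1 else (0::int)))"
  proof (cases "x \<in> E")
    case True
    then show ?thesis using assms(1) by (intro exI[of _ E]) simp
  next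
    case False
    have "openin XX (topspace XX - E)" using assms(2) by (simp add: openin_diff)
    then show ?thesis using False x by (intro exI[of _ "topspace XX - E"]) simp
  qed
qed

lemma zero_dimensional_clopen_isolating:
  assumes "t1_space XX" "zero_dimensional XX" "x \<in> topspace XX" "finite F"
  obtains E where "openin XX E" "closedin XX E" "x \<in> E" "E \<inter> F \<subseteq> {x}"
proof -
  have "finite ((F \<inter> topspace XX) - {x})" "(F \<inter> topspace XX) - {x} \<subseteq> topspace XX"
    using assms(4) by auto
  then have "closedin XX ((F \<inter> topspace XX) - {x})" using assms(1) t1_space_closedin_finite by blast
  then have "openin XX (topspace XX - ((F \<inter> topspace XX) - {x}))" by (simp add: openin_diff)
  then obtain E where "openin XX E" "closedin XX E" "x \<in> E"
    "E \<subseteq> topspace XX - ((F \<inter> topspace XX) - {x})"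
    using assms(2,3) unfolding zero_dimensional_def by blast
  then show ?thesis using that by blast
qed

section \<open>The pairing of A(X) with C_p(X, Z)\<close>

definition pairing :: "('a \<Rightarrow>\<^sub>0 int) \<Rightarrow> ('a \<Rightarrow> int) \<Rightarrow> int" where
  "pairing a f = (\<Sum>x\<in>Poly_Mapping.keys a. Poly_Mapping.lookup a x * f x)"

definition pairing_bihom :: "('a \<Rightarrow>\<^sub>0 int) \<Rightarrow> ('a \<Rightarrow> int) \<Rightarrow> real \<Rightarrow> real" where
  "pairing_bihom a f s = frac (of_int (pairing a f) * s)"

lemma pairing_eq_sum_superset:
  assumes "finite F" "Poly_Mapping.keys a \<subseteq> F"
  shows "pairing a f = (\<Sum>x\<in>F. Poly_Mapping.lookup a x * f x)"
  unfolding pairing_def using assms by (intro sum.mono_neutral_left) (auto simp: in_keys_iff)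

lemma pairing_add: "pairing (a + b) f = pairing a f + pairing b f"
proof -
  define F where "F = Poly_Mapping.keys a \<union> Poly_Mapping.keys b"
  have F: "finite F" "Poly_Mapping.keys a \<subseteq> F" "Poly_Mapping.keys b \<subseteq> F"
    "Poly_Mapping.keys (a + b) \<subseteq> F"
    using keys_add[of a b] by (auto simp: F_def)
  then show ?thesis
    by (simp add: pairing_eq_sum_superset[of F] lookup_add algebra_simps sum.distrib)
qed

lemma pairing_cong: "(\<And>x. x \<in> Poly_Mapping.keys a \<Longrightarrow> f x = g x) \<Longrightarrow> pairing a f = pairing a g"
  unfolding pairing_def by (rule sum.cong) simp_all

lemma pairing_mult_Cp_Z:
  assumes "Poly_Mapping.keys a \<subseteq> topspace XX"
  shows "pairing a (f \<otimes>\<^bsub>Cp_Z XX\<^esub> g) = pairing a f + pairing a g"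
proof -
  have "pairing a (f \<otimes>\<^bsub>Cp_Z XX\<^esub> g) = pairing a (\<lambda>x. f x + g x)"
    unfolding mult_Cp_Z using assms by (intro pairing_cong) auto
  then show ?thesis by (simp add: pairing_def algebra_simps sum.distrib)
qed

lemma pairing_one_Cp_Z:
  assumes "Poly_Mapping.keys a \<subseteq> topspace XX"
  shows "pairing a \<one>\<^bsub>Cp_Z XX\<^esub> = 0"
  unfolding pairing_def one_Cp_Z using assms by (intro sum.neutral) auto

lemma pairing_indicator_Cp_Z:
  assumes "p \<in> E" "E \<inter> Poly_Mapping.keys a \<subseteq> {p}" "p \<in> topspace XX"
    and "Poly_Mapping.keys a \<subseteq> topspace XX"
  shows "pairing a (indicator_Cp_Z XX E) = Poly_Mapping.lookup a p"
proof -
  have "pairing a (indicator_Cp_Z XX E) =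
      (\<Sum>x\<in>insert p (Poly_Mapping.keys a). Poly_Mapping.lookup a x * indicator_Cp_Z XX E x)"
    by (intro pairing_eq_sum_superset) auto
  also have "\<dots> = (\<Sum>x\<in>insert p (Poly_Mapping.keys a). if x = p then Poly_Mapping.lookup a x else 0)"
    using assms by (intro sum.cong) (auto simp: indicator_Cp_Z_def)
  finally show ?thesis by simp
qed

lemma pairing_bihom_add:
  "pairing_bihom (a + b) f s = frac (pairing_bihom a f s + pairing_bihom b f s)"
  by (simp add: pairing_bihom_def pairing_add algebra_simps)

lemma cont_bihom_pairing_bihom:
  assumes a: "Poly_Mapping.keys a \<subseteq> topspace XX"
  shows "cont_bihom (Cp_Z XX) (Cp_Z_top XX) T_grp T_top T_grp T_top (pairing_bihom a)"
  unfolding cont_bihom_def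
proof (intro conjI ballI allI impI)
  fix f assume f: "f \<in> carrier (Cp_Z XX)"
  show "pairing_bihom a f \<in> hom T_grp T_grp" "continuous_map T_top T_top (pairing_bihom a f)"
    unfolding pairing_bihom_def by (rule int_mult_hom_T_grp continuous_map_T_top_int_mult)+
next
  fix s assume s: "s \<in> carrier T_grp"
  show "(\<lambda>f. pairing_bihom a f s) \<in> hom (Cp_Z XX) T_grp"
    by (rule homI) (simp_all add: pairing_bihom_def pairing_mult_Cp_Z[OF a] distrib_right frac_lt_1)
  show "continuous_map (Cp_Z_top XX) T_top (\<lambda>f. pairing_bihom a f s)"
  proof (rule continuous_map_if_locally_constant)
    fix f0 assume "f0 \<in> topspace (Cp_Z_top XX)"
    then have "openin (Cp_Z_top XX) {f \<in> carrier (Cp_Z XX). \<forall>x\<in>Poly_Mapping.keys a. f x = f0 x}"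
      "f0 \<in> {f \<in> carrier (Cp_Z XX). \<forall>x\<in>Poly_Mapping.keys a. f x = f0 x}"
      using a by (simp_all add: openin_Cp_Z_top_agree_on_finite)
    moreover have "\<forall>f\<in>{f \<in> carrier (Cp_Z XX). \<forall>x\<in>Poly_Mapping.keys a. f x = f0 x}.
        pairing_bihom a f s = pairing_bihom a f0 s"
      unfolding pairing_bihom_def using pairing_cong by fastforce
    ultimately show "\<exists>U. openin (Cp_Z_top XX) U \<and> f0 \<in> U \<and>
        (\<forall>f\<in>U. pairing_bihom a f s = pairing_bihom a f0 s)"
      by blast
  qed (auto simp: pairing_bihom_def frac_lt_1)
next
  fix W assume W: "openin T_top W \<and> \<one>\<^bsub>T_grp\<^esub> \<in> W"
  define U where "U = {f \<in> carrier (Cp_Z XX). \<forall>x\<in>Poly_Mapping.keys a. f x = \<one>\<^bsub>Cp_Z XX\<^esub> x}"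
  have "openin (Cp_Z_top XX) U" "\<one>\<^bsub>Cp_Z XX\<^esub> \<in> U"
    using a by (simp_all add: U_def openin_Cp_Z_top_agree_on_finite)
  moreover have "pairing_bihom a f s \<in> W" if "f \<in> U" for f s
  proof -
    have "pairing a f = pairing a \<one>\<^bsub>Cp_Z XX\<^esub>" using that by (intro pairing_cong) (simp add: U_def)
    then show ?thesis using W pairing_one_Cp_Z[OF a] by (simp add: pairing_bihom_def)
  qed
  ultimately show "\<exists>U V. openin (Cp_Z_top XX) U \<and> \<one>\<^bsub>Cp_Z XX\<^esub> \<in> U \<and> openin T_top V \<and>
      \<one>\<^bsub>T_grp\<^esub> \<in> V \<and> (\<forall>f\<in>U. \<forall>s\<in>V. pairing_bihom a f s \<in> W)"
    using W openin_topspace[of T_top] by (intro exI[of _ U] exI[of _ "topspace T_top"]) simp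
qed

lemma int_eq_if_frac_mult_eq:
  assumes "\<And>y. y \<in> carrier T_grp \<Longrightarrow> frac (of_int n * y) = frac (of_int m * y)"
  shows "n = m"
proof -
  define y where "y = 1 / (real_of_int \<bar>n - m\<bar> + 2)"
  have y: "0 < y" "y < 1" by (simp_all add: y_def)
  then obtain k where "of_int n * y = of_int m * y + of_int k"
    using assms[of y] by (auto elim: frac_eqE)
  then have k: "of_int (n - m) * y = of_int k" by (simp add: algebra_simps)
  have "\<bar>of_int (n - m) * y\<bar> < 1"
    by (simp add: y_def abs_mult)
  then have "k = 0" using k by simp
  then show ?thesis using k y by simp
qed

lemma pairing_bihom_inject:
  assumes "t1_space XX" "zero_dimensional XX"
    and a: "Poly_Mapping.keys a \<subseteq> topspace XX" and b: "Poly_Mapping.keys b \<subseteq> topspace XX"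
    and eq: "\<And>f s. f \<in> carrier (Cp_Z XX) \<Longrightarrow> s \<in> carrier T_grp \<Longrightarrow>
      pairing_bihom a f s = pairing_bihom b f s"
  shows "a = b"
proof (rule poly_mapping_eqI)
  fix p
  have pairing_eq: "pairing a f = pairing b f" if "f \<in> carrier (Cp_Z XX)" for f
    using eq[OF that] by (intro int_eq_if_frac_mult_eq) (simp add: pairing_bihom_def)
  show "Poly_Mapping.lookup a p = Poly_Mapping.lookup b p"
  proof (cases "p \<in> topspace XX")
    case False
    then have "p \<notin> Poly_Mapping.keys a" "p \<notin> Poly_Mapping.keys b" using a b by blast+
    then show ?thesis by (simp add: in_keys_iff)
  next
    case True
    obtain E where E: "openin XX E" "closedin XX E" "p \<in> E"
      "E \<inter> (Poly_Mapping.keys a \<union> Poly_Mapping.keys b) \<subseteq> {p}"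
      using zero_dimensional_clopen_isolating[OF assms(1,2) True,
          of "Poly_Mapping.keys a \<union> Poly_Mapping.keys b"]
      by auto
    have "Poly_Mapping.lookup a p = pairing a (indicator_Cp_Z XX E)"
      using E True a by (intro pairing_indicator_Cp_Z[symmetric]) auto
    also have "\<dots> = pairing b (indicator_Cp_Z XX E)"
      using E(1,2) by (intro pairing_eq indicator_Cp_Z_in_carrier)
    also have "\<dots> = Poly_Mapping.lookup b p"
      using E True b by (intro pairing_indicator_Cp_Z) auto
    finally show ?thesis .
  qed
qed

section \<open>Continuous bihomomorphisms C_p(X, Z) \<times> T \<rightarrow> T\<close>

lemma hom_T_grp_eq_0_if_eq_0_near_0:
  assumes c: "c \<in> hom T_grp T_grp" and V: "openin T_top V" "0 \<in> V" "\<And>s. s \<in> V \<Longrightarrow> c s = 0"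
    and s: "s \<in> carrier T_grp"
  shows "c s = 0"
proof -
  have "frac 0 \<in> V" using V(2) by simp
  then obtain \<epsilon> where \<epsilon>: "\<epsilon> > 0" "\<And>z. \<bar>z - 0\<bar> < \<epsilon> \<Longrightarrow> frac z \<in> V"
    using openin_T_topE[OF V(1)] by blast
  obtain N :: nat where N: "N > 0" "inverse (real N) < \<epsilon>" using ex_inverse_of_nat_less[OF \<epsilon>(1)]
    by blast
  have s01: "0 \<le> s" "s < 1" using s by simp_all
  then have sN: "0 \<le> s / real N" "s / real N < 1" "s / real N < \<epsilon>"
    using N by (simp_all add: divide_less_eq field_simps)
  then have "s / real N \<in> V" using \<epsilon>(2)[of "s / real N"] by (simp add: frac_eq)
  have "s = (s / real N) [^]\<^bsub>T_grp\<^esub> N"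
    using sN s01 N(1) by (simp add: nat_pow_T_grp frac_eq)
  then have "c s = c ((s / real N) [^]\<^bsub>T_grp\<^esub> N)" by (rule arg_cong)
  also have "\<dots> = c (s / real N) [^]\<^bsub>T_grp\<^esub> N"
    by (rule group_hom.hom_nat_pow[OF group_hom_into_T_grp[OF T.is_group c]]) (use sN in simp)
  also have "\<dots> = 0" using V(3) \<open>s / real N \<in> V\<close> T.nat_pow_one by simp
  finally show ?thesis .
qed

text \<open>Continuity at (0,0) puts b(f, s) into T_abs < 1/4 for all f vanishing on some finite F and
  small s; these f form a group, so all multiples of b(f, s) stay there, which forces b(f, s) = 0.\<close>
lemma cont_bihom_Cp_Z_T_vanishes_off_finite:
  assumes b: "cont_bihom (Cp_Z XX) (Cp_Z_top XX) T_grp T_top T_grp T_top b"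
  obtains F where "finite F" "F \<subseteq> topspace XX"
    "\<And>f s. f \<in> carrier (Cp_Z XX) \<Longrightarrow> (\<forall>x\<in>F. f x = 0) \<Longrightarrow> s \<in> carrier T_grp \<Longrightarrow> b f s = 0"
proof -
  have b_hom: "(\<lambda>f. b f s) \<in> hom (Cp_Z XX) T_grp" "b f \<in> hom T_grp T_grp"
    if "f \<in> carrier (Cp_Z XX)" "s \<in> carrier T_grp" for f s
    using b that unfolding cont_bihom_def by auto
  let ?W = "{s. 0 \<le> s \<and> s < 1 \<and> T_abs s < 1/4}"
  have "openin T_top ?W \<and> \<one>\<^bsub>T_grp\<^esub> \<in> ?W"
    using openin_T_top_T_abs_less[of "1/4"] by (simp add: T_abs_def)
  then obtain U V where UV: "openin (Cp_Z_top XX) U" "\<one>\<^bsub>Cp_Z XX\<^esub> \<in> U" "openin T_top V" "0 \<in> V"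
    "\<forall>f\<in>U. \<forall>s\<in>V. b f s \<in> ?W"
    using b unfolding cont_bihom_def one_T_grp by blast
  obtain F where F: "finite F" "F \<subseteq> topspace XX"
    "{f \<in> carrier (Cp_Z XX). \<forall>x\<in>F. f x = \<one>\<^bsub>Cp_Z XX\<^esub> x} \<subseteq> U"
    using Cp_Z_top_nbhdE[OF UV(1,2)] by blast
  have "b f s = 0" if f: "f \<in> carrier (Cp_Z XX)" "\<forall>x\<in>F. f x = 0" and s: "s \<in> carrier T_grp" for f s
  proof (rule hom_T_grp_eq_0_if_eq_0_near_0[OF b_hom(2)[OF f(1) s] UV(3,4) _ s])
    fix s assume "s \<in> V"
    then have sT: "s \<in> carrier T_grp" using openin_subset[OF UV(3)] by auto
    have "T_abs (of_nat j * b f s) < 1/4" if "j \<ge> 1" for j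
    proof -
      have "f [^]\<^bsub>Cp_Z XX\<^esub> j \<in> U"
        using F(2,3) f Cp_Z.nat_pow_closed[OF f(1), of j] by (auto simp: nat_pow_Cp_Z one_Cp_Z)
      then have "T_abs (b (f [^]\<^bsub>Cp_Z XX\<^esub> j) s) < 1/4" using UV(5) \<open>s \<in> V\<close> by simp
      moreover have "b (f [^]\<^bsub>Cp_Z XX\<^esub> j) s = frac (of_nat j * b f s)"
        using group_hom.hom_nat_pow[OF group_hom_into_T_grp[OF Cp_Z.is_group b_hom(1)[OF f(1) sT]],
            OF f(1)]
          hom_in_carrier[OF b_hom(1)[OF f(1) sT] f(1)]
        by (simp add: nat_pow_T_grp)
      ultimately show ?thesis by simp
    qed
    then have "b f s \<in> \<int>" by (rule Ints_if_multiples_T_abs_lt_quarter)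
    moreover have "0 \<le> b f s" "b f s < 1" using hom_in_carrier[OF b_hom(1)[OF f(1) sT] f(1)]
      by simp_all
    ultimately show "b f s = 0" by (metis frac_eq frac_eq_0_iff)
  qed
  then show ?thesis using that F(1,2) by blast
qed

lemma frac_sum_of_int_mult_frac:
  "frac (\<Sum>x\<in>G. of_int (k x) * frac (y x)) = frac (\<Sum>x\<in>G. of_int (k x) * y x)"
proof -
  have eq: "(\<Sum>x\<in>G. of_int (k x) * frac (y x)) =
      (\<Sum>x\<in>G. of_int (k x) * y x) + of_int (\<Sum>x\<in>G. - k x * \<lfloor>y x\<rfloor>)"
    by (simp add: frac_def algebra_simps sum.distrib sum_subtractf sum_negf)
  show ?thesis by (simp only: eq frac_add_of_int_right)
qed

lemma hom_Cp_Z_T_grp_lincomb: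
  assumes h: "h \<in> hom (Cp_Z XX) T_grp" and "finite G" and e: "\<And>x. x \<in> G \<Longrightarrow> e x \<in> carrier (Cp_Z XX)"
  shows "restrict (\<lambda>y. \<Sum>x\<in>G. k x * e x y) (topspace XX) \<in> carrier (Cp_Z XX) \<and>
    h (restrict (\<lambda>y. \<Sum>x\<in>G. k x * e x y) (topspace XX)) = frac (\<Sum>x\<in>G. of_int (k x) * h (e x))"
  using assms(2,3)
proof (induction G rule: finite_induct)
  case empty
  have "restrict (\<lambda>y. \<Sum>x\<in>{}. k x * e x y) (topspace XX) = \<one>\<^bsub>Cp_Z XX\<^esub>"
    by (simp add: one_Cp_Z)
  then show ?case
    using group_hom.hom_one[OF group_hom_into_T_grp[OF Cp_Z.is_group h]] Cp_Z.one_closed by simp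
next
  case (insert x G)
  let ?g = "restrict (\<lambda>y. \<Sum>x\<in>G. k x * e x y) (topspace XX)"
  let ?p = "e x [^]\<^bsub>Cp_Z XX\<^esub> k x"
  have ex: "e x \<in> carrier (Cp_Z XX)" and "\<And>y. y \<in> G \<Longrightarrow> e y \<in> carrier (Cp_Z XX)"
    using insert.prems by auto
  then have IH: "?g \<in> carrier (Cp_Z XX)" "h ?g = frac (\<Sum>x\<in>G. of_int (k x) * h (e x))"
    using insert.IH by blast+
  have p: "?p \<in> carrier (Cp_Z XX)" "?p = restrict (\<lambda>y. k x * e x y) (topspace XX)"
    using ex by (rule Cp_Z.int_pow_closed, rule int_pow_Cp_Z)
  have sum: "restrict (\<lambda>y. \<Sum>x\<in>insert x G. k x * e x y) (topspace XX) = ?p \<otimes>\<^bsub>Cp_Z XX\<^esub> ?g"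
    using insert.hyps by (simp add: p(2) mult_Cp_Z fun_eq_iff)
  have "h ?p = h (e x) [^]\<^bsub>T_grp\<^esub> k x"
    using ex by (rule group_hom.hom_int_pow[OF group_hom_into_T_grp[OF Cp_Z.is_group h]])
  also have "\<dots> = frac (of_int (k x) * h (e x))" using hom_in_carrier[OF h ex]
    by (rule int_pow_T_grp)
  finally have "h ?p = frac (of_int (k x) * h (e x))" .
  then have "h (?p \<otimes>\<^bsub>Cp_Z XX\<^esub> ?g) = frac (\<Sum>x\<in>insert x G. of_int (k x) * h (e x))"
    using hom_mult[OF h p(1) IH(1)] IH(2) insert.hyps by simp
  then show ?case using sum p(1) IH(1) by simp
qed

lemma cont_bihom_Cp_Z_T_depends_on_finite:
  assumes b: "cont_bihom (Cp_Z XX) (Cp_Z_top XX) T_grp T_top T_grp T_top b"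
  obtains F where "finite F" "F \<subseteq> topspace XX"
    "\<And>f g s. f \<in> carrier (Cp_Z XX) \<Longrightarrow> g \<in> carrier (Cp_Z XX) \<Longrightarrow> \<forall>x\<in>F. f x = g x \<Longrightarrow>
      s \<in> carrier T_grp \<Longrightarrow> b f s = b g s"
proof -
  obtain F where F: "finite F" "F \<subseteq> topspace XX"
    and vanish: "\<And>f s. f \<in> carrier (Cp_Z XX) \<Longrightarrow> \<forall>x\<in>F. f x = 0 \<Longrightarrow> s \<in> carrier T_grp \<Longrightarrow> b f s = 0"
    using cont_bihom_Cp_Z_T_vanishes_off_finite[OF b] by blast
  have "b f s = b g s"
    if f: "f \<in> carrier (Cp_Z XX)" and g: "g \<in> carrier (Cp_Z XX)" and fg: "\<forall>x\<in>F. f x = g x"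
      and s: "s \<in> carrier T_grp" for f g s
  proof -
    let ?d = "restrict (\<lambda>x. f x - g x) (topspace XX)"
    have b_hom: "(\<lambda>f. b f s) \<in> hom (Cp_Z XX) T_grp"
      using b s unfolding cont_bihom_def by auto
    have d: "?d \<in> carrier (Cp_Z XX)" using Cp_Z_map2_closed[OF f g, of "(-)"] .
    have "f = g \<otimes>\<^bsub>Cp_Z XX\<^esub> ?d"
      by (rule Cp_Z_eqI[OF f Cp_Z.m_closed[OF g d]]) (simp add: mult_Cp_Z)
    then have "b f s = frac (b g s + b ?d s)" using hom_mult[OF b_hom g d] by simp
    moreover have "b ?d s = 0" using d fg F(2) s by (intro vanish) auto
    ultimately show ?thesis using hom_in_carrier[OF b_hom g] by (simp add: frac_eq)
  qed
  then show ?thesis using that F by blast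
qed

lemma cont_bihom_Cp_Z_T_on_clopen_indicators:
  assumes t1: "t1_space XX" and zd: "zero_dimensional XX"
    and b: "cont_bihom (Cp_Z XX) (Cp_Z_top XX) T_grp T_top T_grp T_top b"
    and F: "finite F" "F \<subseteq> topspace XX"
  obtains E n where "\<And>x. x \<in> F \<Longrightarrow> openin XX (E x) \<and> closedin XX (E x) \<and> x \<in> E x \<and> E x \<inter> F \<subseteq> {x}"
    "\<And>x s. x \<in> F \<Longrightarrow> s \<in> carrier T_grp \<Longrightarrow>
      b (indicator_Cp_Z XX (E x)) s = frac (of_int (n x) * s)"
proof -
  have "\<exists>E n. openin XX E \<and> closedin XX E \<and> x \<in> E \<and> E \<inter> F \<subseteq> {x} \<and>
      (\<forall>s\<in>carrier T_grp. b (indicator_Cp_Z XX E) s = frac (of_int n * s))" if "x \<in> F" for x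
  proof -
    have "x \<in> topspace XX" using that F(2) by blast
    then obtain E where E: "openin XX E" "closedin XX E" "x \<in> E" "E \<inter> F \<subseteq> {x}"
      using zero_dimensional_clopen_isolating[OF t1 zd _ F(1)] by blast
    then have "indicator_Cp_Z XX E \<in> carrier (Cp_Z XX)" by (intro indicator_Cp_Z_in_carrier)
    then have "b (indicator_Cp_Z XX E) \<in> hom T_grp T_grp"
      "continuous_map T_top T_top (b (indicator_Cp_Z XX E))"
      using b unfolding cont_bihom_def by auto
    then obtain n where "\<And>s. s \<in> carrier T_grp \<Longrightarrow> b (indicator_Cp_Z XX E) s = frac (of_int n * s)"
      by (rule continuous_endomorphism_T_grp) blast
    then show ?thesis using E by blast
  qed
  then have "\<forall>x\<in>F. \<exists>E n. openin XX E \<and> closedin XX E \<and> x \<in> E \<and> E \<inter> F \<subseteq> {x} \<and>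
      (\<forall>s\<in>carrier T_grp. b (indicator_Cp_Z XX E) s = frac (of_int n * s))" by blast
  from bchoice[OF this] obtain E where "\<forall>x\<in>F. \<exists>n. openin XX (E x) \<and> closedin XX (E x) \<and> x \<in> E x \<and>
      E x \<inter> F \<subseteq> {x} \<and> (\<forall>s\<in>carrier T_grp. b (indicator_Cp_Z XX (E x)) s = frac (of_int n * s))"
    ..
  from bchoice[OF this] obtain n where "\<forall>x\<in>F. openin XX (E x) \<and> closedin XX (E x) \<and> x \<in> E x \<and>
      E x \<inter> F \<subseteq> {x} \<and> (\<forall>s\<in>carrier T_grp. b (indicator_Cp_Z XX (E x)) s = frac (of_int (n x) * s))"
    ..
  then show ?thesis using that by blast
qed

lemma cont_bihom_Cp_Z_T_eq_pairing_bihom: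
  assumes t1: "t1_space XX" and zd: "zero_dimensional XX"
    and b: "cont_bihom (Cp_Z XX) (Cp_Z_top XX) T_grp T_top T_grp T_top b"
  obtains a where "Poly_Mapping.keys a \<subseteq> topspace XX"
    "\<And>f s. f \<in> carrier (Cp_Z XX) \<Longrightarrow> s \<in> carrier T_grp \<Longrightarrow> b f s = pairing_bihom a f s"
proof -
  obtain F where F: "finite F" "F \<subseteq> topspace XX"
    and agree: "\<And>f g s. f \<in> carrier (Cp_Z XX) \<Longrightarrow> g \<in> carrier (Cp_Z XX) \<Longrightarrow> \<forall>x\<in>F. f x = g x \<Longrightarrow>
      s \<in> carrier T_grp \<Longrightarrow> b f s = b g s"
    using cont_bihom_Cp_Z_T_depends_on_finite[OF b] by blast
  obtain E n where E: "\<And>x. x \<in> F \<Longrightarrow> openin XX (E x) \<and> closedin XX (E x) \<and> x \<in> E x \<and> E x \<inter> F \<subseteq> {x}"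
    and n: "\<And>x s. x \<in> F \<Longrightarrow> s \<in> carrier T_grp \<Longrightarrow>
      b (indicator_Cp_Z XX (E x)) s = frac (of_int (n x) * s)"
    using cont_bihom_Cp_Z_T_on_clopen_indicators[OF t1 zd b F] by blast
  define a where "a = Abs_poly_mapping (\<lambda>x. if x \<in> F then n x else 0)"
  have lookup_a: "Poly_Mapping.lookup a = (\<lambda>x. if x \<in> F then n x else 0)"
    unfolding a_def using F(1)
    by (intro Abs_poly_mapping_inverse) (auto elim: finite_subset[rotated])
  have keys_a: "Poly_Mapping.keys a \<subseteq> F" by (auto simp: in_keys_iff lookup_a split: if_splits)
  show ?thesis
  proof (rule that)
    show "Poly_Mapping.keys a \<subseteq> topspace XX" using keys_a F(2) by blast
    fix f s assume f: "f \<in> carrier (Cp_Z XX)" and s: "s \<in> carrier T_grp"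
    let ?g = "restrict (\<lambda>y. \<Sum>x\<in>F. f x * indicator_Cp_Z XX (E x) y) (topspace XX)"
    have b_hom: "(\<lambda>f. b f s) \<in> hom (Cp_Z XX) T_grp"
      using b s unfolding cont_bihom_def by auto
    have "?g \<in> carrier (Cp_Z XX) \<and>
        b ?g s = frac (\<Sum>x\<in>F. of_int (f x) * b (indicator_Cp_Z XX (E x)) s)"
      using E by (intro hom_Cp_Z_T_grp_lincomb[OF b_hom F(1)] indicator_Cp_Z_in_carrier) auto
    then have g: "?g \<in> carrier (Cp_Z XX)"
      "b ?g s = frac (\<Sum>x\<in>F. of_int (f x) * frac (of_int (n x) * s))"
      using n s by (auto cong: sum.cong)
    have "f y = ?g y" if "y \<in> F" for y
    proof -
      have "(\<Sum>x\<in>F. f x * indicator_Cp_Z XX (E x) y) = (\<Sum>x\<in>F. if x = y then f x else 0)"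
        using E that F(2) by (intro sum.cong) (auto simp: indicator_Cp_Z_def)
      then show ?thesis using that F by auto
    qed
    then have "b f s = b ?g s" using f g(1) s by (intro agree) auto
    also have "\<dots> = frac (\<Sum>x\<in>F. of_int (f x) * (of_int (n x) * s))"
      unfolding g(2) by (rule frac_sum_of_int_mult_frac)
    also have "(\<Sum>x\<in>F. of_int (f x) * (of_int (n x) * s)) = of_int (pairing a f) * s"
      using F(1) keys_a
      by (simp add: pairing_eq_sum_superset lookup_a sum_distrib_left sum_distrib_right
          algebra_simps)
    finally show "b f s = pairing_bihom a f s" by (simp add: pairing_bihom_def)
  qed
qed

section \<open>Duals of Q-tensor products with T\<close>

lemma cont_bihom_at_oneE:
  assumes "cont_bihom G1 \<tau>1 G2 \<tau>2 H \<tau>H b" "openin \<tau>H W" "\<one>\<^bsub>H\<^esub> \<in> W"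
  obtains U V where "openin \<tau>1 U" "\<one>\<^bsub>G1\<^esub> \<in> U" "openin \<tau>2 V" "\<one>\<^bsub>G2\<^esub> \<in> V"
    "\<And>x y. x \<in> U \<Longrightarrow> y \<in> V \<Longrightarrow> b x y \<in> W"
proof -
  have "\<forall>W. openin \<tau>H W \<and> \<one>\<^bsub>H\<^esub> \<in> W \<longrightarrow> (\<exists>U V. openin \<tau>1 U \<and> \<one>\<^bsub>G1\<^esub> \<in> U \<and>
      openin \<tau>2 V \<and> \<one>\<^bsub>G2\<^esub> \<in> V \<and> (\<forall>x\<in>U. \<forall>y\<in>V. b x y \<in> W))"
    using assms(1) unfolding cont_bihom_def by blast
  then have "\<exists>U V. openin \<tau>1 U \<and> \<one>\<^bsub>G1\<^esub> \<in> U \<and> openin \<tau>2 V \<and> \<one>\<^bsub>G2\<^esub> \<in> V \<and>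
      (\<forall>x\<in>U. \<forall>y\<in>V. b x y \<in> W)"
    using assms(2,3) by blast
  then show ?thesis using that by blast
qed

lemma cont_bihom_compose_hom:
  assumes t: "cont_bihom G1 \<tau>1 G2 \<tau>2 P \<tau>P t"
    and P: "group P" "topspace \<tau>P = carrier P" and H: "group H"
    and h: "h \<in> hom P H" "continuous_map \<tau>P \<tau>H h"
  shows "cont_bihom G1 \<tau>1 G2 \<tau>2 H \<tau>H (\<lambda>x y. h (t x y))"
  unfolding cont_bihom_def
proof (intro conjI ballI allI impI)
  fix x assume x: "x \<in> carrier G1"
  have tx: "t x \<in> hom G2 P" "continuous_map \<tau>2 \<tau>P (t x)" using t x unfolding cont_bihom_def by auto
  show "(\<lambda>y. h (t x y)) \<in> hom G2 H"
    using hom_compose[OF tx(1) h(1)] by (simp add: o_def)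
  show "continuous_map \<tau>2 \<tau>H (\<lambda>y. h (t x y))"
    using continuous_map_compose[OF tx(2) h(2)] by (simp add: o_def)
next
  fix y assume y: "y \<in> carrier G2"
  have ty: "(\<lambda>x. t x y) \<in> hom G1 P" "continuous_map \<tau>1 \<tau>P (\<lambda>x. t x y)"
    using t y unfolding cont_bihom_def by auto
  show "(\<lambda>x. h (t x y)) \<in> hom G1 H"
    using hom_compose[OF ty(1) h(1)] by (simp add: o_def)
  show "continuous_map \<tau>1 \<tau>H (\<lambda>x. h (t x y))"
    using continuous_map_compose[OF ty(2) h(2)] by (simp add: o_def)
next
  fix W assume W: "openin \<tau>H W \<and> \<one>\<^bsub>H\<^esub> \<in> W"
  have "h \<one>\<^bsub>P\<^esub> = \<one>\<^bsub>H\<^esub>"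
    using group_hom.hom_one[of P H h] P(1) H h(1) by (simp add: group_hom_def group_hom_axioms_def)
  then have "openin \<tau>P {z \<in> topspace \<tau>P. h z \<in> W}" "\<one>\<^bsub>P\<^esub> \<in> {z \<in> topspace \<tau>P. h z \<in> W}"
    using W P monoid.one_closed[OF group.is_monoid[OF P(1)]] openin_continuous_map_preimage[OF h(2)]
    by auto
  then obtain U V where "openin \<tau>1 U" "\<one>\<^bsub>G1\<^esub> \<in> U" "openin \<tau>2 V" "\<one>\<^bsub>G2\<^esub> \<in> V"
    "\<And>x y. x \<in> U \<Longrightarrow> y \<in> V \<Longrightarrow> t x y \<in> {z \<in> topspace \<tau>P. h z \<in> W}"
    using cont_bihom_at_oneE[OF t] by blast
  then show "\<exists>U V. openin \<tau>1 U \<and> \<one>\<^bsub>G1\<^esub> \<in> U \<and> openin \<tau>2 V \<and> \<one>\<^bsub>G2\<^esub> \<in> V \<and>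
      (\<forall>x\<in>U. \<forall>y\<in>V. h (t x y) \<in> W)"
    by (intro exI[of _ U] exI[of _ V]) simp
qed

lemma carrier_dual_group:
  "chi \<in> carrier (dual_group G \<tau>) \<longleftrightarrow>
     chi \<in> hom G T_grp \<and> continuous_map \<tau> T_top chi \<and> chi \<in> extensional (carrier G)"
  by (simp add: dual_group_def characters_def)

lemma mult_dual_group:
  "chi \<otimes>\<^bsub>dual_group G \<tau>\<^esub> psi = restrict (\<lambda>z. frac (chi z + psi z)) (carrier G)"
  by (simp add: dual_group_def)

lemma dual_group_mult_closed:
  assumes G: "monoid G" "topspace \<tau> = carrier G"
    and chi: "chi \<in> carrier (dual_group G \<tau>)" and psi: "psi \<in> carrier (dual_group G \<tau>)"
  shows "chi \<otimes>\<^bsub>dual_group G \<tau>\<^esub> psi \<in> carrier (dual_group G \<tau>)"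
proof -
  have hom: "chi \<in> hom G T_grp" "psi \<in> hom G T_grp"
    and cont: "continuous_map \<tau> T_top chi" "continuous_map \<tau> T_top psi"
    using chi psi by (simp_all add: carrier_dual_group)
  have "restrict (\<lambda>z. frac (chi z + psi z)) (carrier G) \<in> hom G T_grp"
  proof (rule homI)
    fix x y assume xy: "x \<in> carrier G" "y \<in> carrier G"
    have "frac (chi (x \<otimes>\<^bsub>G\<^esub> y) + psi (x \<otimes>\<^bsub>G\<^esub> y)) = frac ((chi x + chi y) + (psi x + psi y))"
      using hom_mult[OF hom(1) xy] hom_mult[OF hom(2) xy] by simp
    also have "\<dots> = frac ((chi x + psi x) + (chi y + psi y))" by (simp add: add_ac)
    also have "\<dots> = frac (frac (chi x + psi x) + frac (chi y + psi y))" by simp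
    finally show "restrict (\<lambda>z. frac (chi z + psi z)) (carrier G) (x \<otimes>\<^bsub>G\<^esub> y) =
        restrict (\<lambda>z. frac (chi z + psi z)) (carrier G) x \<otimes>\<^bsub>T_grp\<^esub>
        restrict (\<lambda>z. frac (chi z + psi z)) (carrier G) y"
      using xy monoid.m_closed[OF G(1) xy] by simp
  qed (simp add: frac_lt_1)
  moreover have "continuous_map \<tau> T_top (\<lambda>z. frac (chi z + psi z))"
    using continuous_map_compose[OF continuous_map_pairedI[OF cont] continuous_map_T_top_add]
    by (simp add: o_def)
  then have "continuous_map \<tau> T_top (restrict (\<lambda>z. frac (chi z + psi z)) (carrier G))"
    by (rule continuous_map_eq) (simp add: G(2))
  ultimately show ?thesis by (simp add: carrier_dual_group mult_dual_group)
qed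

lemma Q_tensor_universalE:
  fixes H :: "'h monoid"
  assumes "Q_tensor_universal TYPE('h) G1 \<tau>1 G2 \<tau>2 P \<tau>P t" "in_Q H \<tau>H"
    and "cont_bihom G1 \<tau>1 G2 \<tau>2 H \<tau>H b"
  obtains f where "f \<in> hom P H" "continuous_map \<tau>P \<tau>H f"
    "\<forall>x\<in>carrier G1. \<forall>y\<in>carrier G2. b x y = f (t x y)"
    "\<And>g. g \<in> hom P H \<Longrightarrow> continuous_map \<tau>P \<tau>H g \<Longrightarrow>
      \<forall>x\<in>carrier G1. \<forall>y\<in>carrier G2. b x y = g (t x y) \<Longrightarrow> \<forall>z\<in>carrier P. g z = f z"
proof -
  have "\<forall>(H::'h monoid) \<tau>H b. in_Q H \<tau>H \<and> cont_bihom G1 \<tau>1 G2 \<tau>2 H \<tau>H b \<longrightarrow>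
      (\<exists>f. f \<in> hom P H \<and> continuous_map \<tau>P \<tau>H f \<and>
        (\<forall>x\<in>carrier G1. \<forall>y\<in>carrier G2. b x y = f (t x y)) \<and>
        (\<forall>g. g \<in> hom P H \<and> continuous_map \<tau>P \<tau>H g \<and>
          (\<forall>x\<in>carrier G1. \<forall>y\<in>carrier G2. b x y = g (t x y)) \<longrightarrow> (\<forall>z\<in>carrier P. g z = f z)))"
    using assms(1) unfolding Q_tensor_universal_def .
  from mp[OF spec[OF spec[OF spec[OF this, of H], of \<tau>H], of b]] assms(2,3) show ?thesis
    using that by blast
qed

locale Q_tensor_with_T =
  fixes G1 :: "'g1 monoid" and \<tau>1 :: "'g1 topology" and G2 :: "'g2 monoid" and \<tau>2 :: "'g2 topology"
    and P :: "'p monoid" and \<tau>P :: "'p topology" and t :: "'g1 \<Rightarrow> 'g2 \<Rightarrow> 'p"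
  assumes in_Q: "in_Q P \<tau>P"
    and t: "cont_bihom G1 \<tau>1 G2 \<tau>2 P \<tau>P t"
    and univ: "Q_tensor_universal TYPE(real) G1 \<tau>1 G2 \<tau>2 P \<tau>P t"
begin

lemma group_P: "group P" and topspace_\<tau>P: "topspace \<tau>P = carrier P"
  using in_Q by (simp_all add: in_Q_def top_ab_group_def comm_group_def)

lemma t_in_carrier: "x \<in> carrier G1 \<Longrightarrow> y \<in> carrier G2 \<Longrightarrow> t x y \<in> carrier P"
  using t unfolding cont_bihom_def by (auto simp: hom_in_carrier)

lemma ex1_character:
  assumes b: "cont_bihom G1 \<tau>1 G2 \<tau>2 T_grp T_top b"
  shows "\<exists>!chi. chi \<in> carrier (dual_group P \<tau>P) \<and>
    (\<forall>x\<in>carrier G1. \<forall>y\<in>carrier G2. b x y = chi (t x y))"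
proof -
  obtain f where f: "f \<in> hom P T_grp" "continuous_map \<tau>P T_top f"
      "\<forall>x\<in>carrier G1. \<forall>y\<in>carrier G2. b x y = f (t x y)"
    and f_unique: "\<And>g. g \<in> hom P T_grp \<Longrightarrow> continuous_map \<tau>P T_top g \<Longrightarrow>
      \<forall>x\<in>carrier G1. \<forall>y\<in>carrier G2. b x y = g (t x y) \<Longrightarrow> \<forall>z\<in>carrier P. g z = f z"
    using Q_tensor_universalE[OF univ in_Q_T b] by blast
  show ?thesis
  proof (rule ex1I)
    have "restrict f (carrier P) \<in> hom P T_grp"
      using group.hom_restrict[OF group_P f(1), of "restrict f (carrier P)"] by simp
    moreover have "continuous_map \<tau>P T_top (restrict f (carrier P))"
      using f(2) by (rule continuous_map_eq) (simp add: topspace_\<tau>P)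
    ultimately show "restrict f (carrier P) \<in> carrier (dual_group P \<tau>P) \<and>
        (\<forall>x\<in>carrier G1. \<forall>y\<in>carrier G2. b x y = restrict f (carrier P) (t x y))"
      using f(3) t_in_carrier by (simp add: carrier_dual_group)
  next
    fix chi assume "chi \<in> carrier (dual_group P \<tau>P) \<and>
        (\<forall>x\<in>carrier G1. \<forall>y\<in>carrier G2. b x y = chi (t x y))"
    then show "chi = restrict f (carrier P)"
      using f_unique[of chi]
      by (intro extensionalityI[of _ "carrier P"]) (auto simp: carrier_dual_group)
  qed
qed

definition character_of :: "('g1 \<Rightarrow> 'g2 \<Rightarrow> real) \<Rightarrow> 'p \<Rightarrow> real" where
  "character_of b = (THE chi. chi \<in> carrier (dual_group P \<tau>P) \<and>
     (\<forall>x\<in>carrier G1. \<forall>y\<in>carrier G2. b x y = chi (t x y)))"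

lemma character_of:
  assumes "cont_bihom G1 \<tau>1 G2 \<tau>2 T_grp T_top b"
  shows "character_of b \<in> carrier (dual_group P \<tau>P)"
    and "\<And>x y. x \<in> carrier G1 \<Longrightarrow> y \<in> carrier G2 \<Longrightarrow> b x y = character_of b (t x y)"
  using theI'[OF ex1_character[OF assms]] unfolding character_of_def by blast+

lemma character_of_unique:
  assumes "cont_bihom G1 \<tau>1 G2 \<tau>2 T_grp T_top b" "chi \<in> carrier (dual_group P \<tau>P)"
    and "\<And>x y. x \<in> carrier G1 \<Longrightarrow> y \<in> carrier G2 \<Longrightarrow> b x y = chi (t x y)"
  shows "character_of b = chi"
  unfolding character_of_def using assms
  by (intro the1_equality[OF ex1_character[OF assms(1)]]) auto

lemma character_of_frac_add:
  assumes b: "cont_bihom G1 \<tau>1 G2 \<tau>2 T_grp T_top b" and b': "cont_bihom G1 \<tau>1 G2 \<tau>2 T_grp T_top b'"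
    and b'': "cont_bihom G1 \<tau>1 G2 \<tau>2 T_grp T_top b''"
    and sum: "\<And>x y. x \<in> carrier G1 \<Longrightarrow> y \<in> carrier G2 \<Longrightarrow> b'' x y = frac (b x y + b' x y)"
  shows "character_of b'' = character_of b \<otimes>\<^bsub>dual_group P \<tau>P\<^esub> character_of b'"
proof (rule character_of_unique[OF b''])
  show "character_of b \<otimes>\<^bsub>dual_group P \<tau>P\<^esub> character_of b' \<in> carrier (dual_group P \<tau>P)"
    using group.is_monoid[OF group_P] topspace_\<tau>P character_of(1)[OF b] character_of(1)[OF b']
    by (rule dual_group_mult_closed)
  show "b'' x y = (character_of b \<otimes>\<^bsub>dual_group P \<tau>P\<^esub> character_of b') (t x y)"
    if "x \<in> carrier G1" "y \<in> carrier G2" for x y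
    using sum[OF that] character_of(2)[OF b that] character_of(2)[OF b' that] t_in_carrier[OF that]
    by (simp add: mult_dual_group)
qed

lemma character_of_compose:
  assumes chi: "chi \<in> carrier (dual_group P \<tau>P)"
  shows "cont_bihom G1 \<tau>1 G2 \<tau>2 T_grp T_top (\<lambda>x y. chi (t x y))"
    and "character_of (\<lambda>x y. chi (t x y)) = chi"
proof -
  show b: "cont_bihom G1 \<tau>1 G2 \<tau>2 T_grp T_top (\<lambda>x y. chi (t x y))"
    using cont_bihom_compose_hom[OF t group_P topspace_\<tau>P T.is_group, of chi] chi
    by (simp add: carrier_dual_group)
  show "character_of (\<lambda>x y. chi (t x y)) = chi"
    using character_of_unique[OF b chi] by simp
qed

text \<open>The dual of the Q-tensor product with T is the group of continuous bihomomorphisms into T,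
  here presented as the image of \<beta>.\<close>
theorem dual_group_iso_if_parametrizes_bihoms:
  fixes A :: "'c monoid" and \<beta> :: "'c \<Rightarrow> 'g1 \<Rightarrow> 'g2 \<Rightarrow> real"
  assumes A: "group A"
    and \<beta>_bihom: "\<And>a. a \<in> carrier A \<Longrightarrow> cont_bihom G1 \<tau>1 G2 \<tau>2 T_grp T_top (\<beta> a)"
    and \<beta>_mult: "\<And>a a' x y. a \<in> carrier A \<Longrightarrow> a' \<in> carrier A \<Longrightarrow> x \<in> carrier G1 \<Longrightarrow>
      y \<in> carrier G2 \<Longrightarrow> \<beta> (a \<otimes>\<^bsub>A\<^esub> a') x y = frac (\<beta> a x y + \<beta> a' x y)"
    and \<beta>_inj: "\<And>a a'. a \<in> carrier A \<Longrightarrow> a' \<in> carrier A \<Longrightarrow>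
      (\<And>x y. x \<in> carrier G1 \<Longrightarrow> y \<in> carrier G2 \<Longrightarrow> \<beta> a x y = \<beta> a' x y) \<Longrightarrow> a = a'"
    and \<beta>_surj: "\<And>b. cont_bihom G1 \<tau>1 G2 \<tau>2 T_grp T_top b \<Longrightarrow>
      \<exists>a\<in>carrier A. \<forall>x\<in>carrier G1. \<forall>y\<in>carrier G2. b x y = \<beta> a x y"
  shows "dual_group P \<tau>P \<cong> A"
proof -
  let ?\<Psi> = "\<lambda>a. character_of (\<beta> a)"
  have "?\<Psi> \<in> hom A (dual_group P \<tau>P)"
    using A \<beta>_bihom \<beta>_mult
    by (intro homI character_of(1) character_of_frac_add)
      (simp_all add: group.is_monoid monoid.m_closed)
  moreover have "inj_on ?\<Psi> (carrier A)"
  proof (rule inj_onI)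
    fix a a' assume a: "a \<in> carrier A" "a' \<in> carrier A" and "?\<Psi> a = ?\<Psi> a'"
    then show "a = a'"
      using character_of(2)[OF \<beta>_bihom[OF a(1)]] character_of(2)[OF \<beta>_bihom[OF a(2)]]
      by (intro \<beta>_inj) simp_all
  qed
  moreover have "carrier (dual_group P \<tau>P) \<subseteq> ?\<Psi> ` carrier A"
  proof
    fix chi assume chi: "chi \<in> carrier (dual_group P \<tau>P)"
    from \<beta>_surj[OF character_of_compose(1)[OF chi]] obtain a where a: "a \<in> carrier A"
      "\<forall>x\<in>carrier G1. \<forall>y\<in>carrier G2. chi (t x y) = \<beta> a x y" ..
    then have "?\<Psi> a = chi"
      using chi by (intro character_of_unique[OF \<beta>_bihom[OF a(1)]]) auto
    then show "chi \<in> ?\<Psi> ` carrier A" using a(1) by blast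
  qed
  ultimately have "?\<Psi> \<in> iso A (dual_group P \<tau>P)"
    using character_of(1)[OF \<beta>_bihom] by (auto simp: iso_def bij_betw_def)
  then show ?thesis by (rule group.iso_sym[OF A is_isoI])
qed

end

theorem corollary5p3:
  fixes XX :: "'a topology"
    and P :: "'p monoid" and \<tau>P :: "'p topology"
    and t :: "('a \<Rightarrow> int) \<Rightarrow> real \<Rightarrow> 'p"
  assumes "tychonoff_space XX"
    and "zero_dimensional XX"
    and "in_Q P \<tau>P"
    and "cont_bihom (Cp_Z XX) (Cp_Z_top XX) T_grp T_top P \<tau>P t"
    and "Q_tensor_universal TYPE('p) (Cp_Z XX) (Cp_Z_top XX) T_grp T_top P \<tau>P t"
    and "Q_tensor_universal TYPE(real) (Cp_Z XX) (Cp_Z_top XX) T_grp T_top P \<tau>P t"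
  shows "dual_group P \<tau>P \<cong> free_Abelian_group (topspace XX)"
proof -
  \<comment> \<open>only the universal property against T, whose carrier has type real, is needed\<close>
  interpret Q_tensor_with_T "Cp_Z XX" "Cp_Z_top XX" T_grp T_top P \<tau>P t
    by unfold_locales (rule assms)+
  have t1: "t1_space XX" using assms(1) by (simp add: tychonoff_space_def Hausdorff_imp_t1_space)
  show ?thesis
  proof (rule dual_group_iso_if_parametrizes_bihoms[where \<beta> = pairing_bihom,
        OF group_free_Abelian_group])
    show "cont_bihom (Cp_Z XX) (Cp_Z_top XX) T_grp T_top T_grp T_top (pairing_bihom a)"
      if "a \<in> carrier (free_Abelian_group (topspace XX))" for a
      using that by (simp add: cont_bihom_pairing_bihom)
    show "pairing_bihom (a \<otimes>\<^bsub>free_Abelian_group (topspace XX)\<^esub> a') f s =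
        frac (pairing_bihom a f s + pairing_bihom a' f s)" for a a' f s
      by (simp add: pairing_bihom_add)
    show "a = a'"
      if "a \<in> carrier (free_Abelian_group (topspace XX))"
        "a' \<in> carrier (free_Abelian_group (topspace XX))"
        "\<And>f s. f \<in> carrier (Cp_Z XX) \<Longrightarrow> s \<in> carrier T_grp \<Longrightarrow>
          pairing_bihom a f s = pairing_bihom a' f s"
      for a a'
      using that by (intro pairing_bihom_inject[OF t1 assms(2)]) simp_all
    show "\<exists>a\<in>carrier (free_Abelian_group (topspace XX)).
        \<forall>f\<in>carrier (Cp_Z XX). \<forall>s\<in>carrier T_grp. b f s = pairing_bihom a f s"
      if "cont_bihom (Cp_Z XX) (Cp_Z_top XX) T_grp T_top T_grp T_top b" for b
      using cont_bihom_Cp_Z_T_eq_pairing_bihom[OF t1 assms(2) that]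
      by (metis carrier_free_Abelian_group_iff)
  qed
qed

end
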